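(* Let $\phi=\tilde p/p$ be a degree $(n,1)$ rational inner function as in the context and let $\alpha\in\mathbb{T}$. Then: (i) $B_\alpha$ is a finite Blaschke product; (ii) if $\alpha$ is a generic value for $\phi$, then $B_\alpha$ has degree $n$ and $\mathcal{C}_\alpha=E_\alpha$; (iii) if $\alpha$ is an exceptional value and, after reordering, $\phi^*(\tau_k,\lambda_k)=\alpha$ exactly for $k=1,\dots,\ell$, then $B_\alpha$ has degree $n-\ell$ and $\mathcal{C}_\alpha=E_\alpha\cup L_1\cup\cdots\cup L_\ell$.
   Context: $\mathbb{D}$ is the open unit disk, $\mathbb{T}$ the unit circle. Fix $n\ge1$. Let $p\in\mathbb{C}[z_1,z_2]$ have no zeros on $\mathbb{D}^2$, degree at most $n$ in $z_1$ and at most $1$ in $z_2$; write $p(z)=p_1(z_1)+z_2p_2(z_1)$. Set $\tilde p(z)=z_1^nz_2\overline{p(1/\bar z_1,1/\bar z_2)}=z_2\tilde p_1(z_1)+\tilde p_2(z_1)$ with $\tilde p_i(z)=z^n\overline{p_i(1/\bar z)}$. Assume $\tilde p$ has degree exactly $(n,1)$ and $p,\tilde p$ have no common factor, so $\phi=\tilde p/p$ is a degree $(n,1)$ rational inner function. The zeros of $p$ on $\mathbb{T}^2$ are distinct points $(\tau_1,\lambda_1),\dots,(\tau_m,\lambda_m)$; the non-tangential limit $\phi^*$ exists and is unimodular at every point of $\mathbb{T}^2$. $\alpha\in\mathbb{T}$ is exceptional if $\phi^*(\tau_k,\lambda_k)=\alpha$ for some $k$, generic otherwise. $B_\alpha$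 is the rational function $\frac{\tilde p_1(z)-\alpha p_2(z)}{\alpha p_1(z)-\tilde p_2(z)}$ with common factors cancelled; $E_\alpha=\{(\zeta,\overline{B_\alpha(\zeta)}):\zeta\in\mathbb{T}\}$; $L_k=\{\tau_k\}\times\mathbb{T}$; $\mathcal{C}_\alpha=\{\zeta\in\mathbb{T}^2:\tilde p(\zeta)=\alpha p(\zeta)\}$. *)

theory Defs
  imports "HOL-Analysis.Analysis" "HOL-Computational_Algebra.Computational_Algebra" "HOL-Computational_Algebra.Field_as_Ring"
begin

text \<open>Reflection of a one-variable polynomial of degree at most n:
  refl_poly n q (z) = z^n * conj (q (1 / conj z)).  Coefficient k is conj (coeff q (n - k)).\<close>
definition refl_poly :: "nat \<Rightarrow> complex poly \<Rightarrow> complex poly" where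
  "refl_poly n q = Poly (map cnj (rev (map (coeff q) [0..<Suc n])))"

definition pval :: "complex poly \<Rightarrow> complex poly \<Rightarrow> complex \<times> complex \<Rightarrow> complex" where
  "pval p1 p2 z = poly p1 (fst z) + snd z * poly p2 (fst z)"

definition ptval :: "nat \<Rightarrow> complex poly \<Rightarrow> complex poly \<Rightarrow> complex \<times> complex \<Rightarrow> complex" where
  "ptval n p1 p2 z = snd z * poly (refl_poly n p1) (fst z) + poly (refl_poly n p2) (fst z)"

definition bipoly :: "complex poly \<Rightarrow> complex poly \<Rightarrow> complex poly poly" where
  "bipoly p1 p2 = [:p1, p2:]"

definition bipoly_tilde :: "nat \<Rightarrow> complex poly \<Rightarrow> complex poly \<Rightarrow> complex poly poly" where
  "bipoly_tilde n p1 p2 = [:refl_poly n p2, refl_poly n p1:]"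

definition phi :: "nat \<Rightarrow> complex poly \<Rightarrow> complex poly \<Rightarrow> complex \<times> complex \<Rightarrow> complex" where
  "phi n p1 p2 z = ptval n p1 p2 z / pval p1 p2 z"

definition circle :: "complex set" where "circle = {z. cmod z = 1}"
definition disc :: "complex set" where "disc = {z. cmod z < 1}"

definition nt_region :: "real \<Rightarrow> complex \<times> complex \<Rightarrow> (complex \<times> complex) set" where
  "nt_region c \<zeta> = {z. fst z \<in> disc \<and> snd z \<in> disc \<and>
      cmod (fst \<zeta> - fst z) < c * (1 - cmod (fst z)) \<and>
      cmod (snd \<zeta> - snd z) < c * (1 - cmod (snd z))}"

definition has_nt_limit :: "(complex \<times> complex \<Rightarrow> complex) \<Rightarrow> complex \<times> complex \<Rightarrow> complex \<Rightarrow> bool" where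
  "has_nt_limit f \<zeta> L \<longleftrightarrow> (\<forall>c>1. (f \<longlongrightarrow> L) (at \<zeta> within nt_region c \<zeta>))"

definition nt_lim :: "(complex \<times> complex \<Rightarrow> complex) \<Rightarrow> complex \<times> complex \<Rightarrow> complex" where
  "nt_lim f \<zeta> = (THE L. has_nt_limit f \<zeta> L)"

definition torus_zeros :: "complex poly \<Rightarrow> complex poly \<Rightarrow> (complex \<times> complex) set" where
  "torus_zeros p1 p2 = {z. fst z \<in> circle \<and> snd z \<in> circle \<and> pval p1 p2 z = 0}"

definition exc_points :: "nat \<Rightarrow> complex poly \<Rightarrow> complex poly \<Rightarrow> complex \<Rightarrow> (complex \<times> complex) set" where
  "exc_points n p1 p2 \<alpha> = {\<zeta> \<in> torus_zeros p1 p2. nt_lim (phi n p1 p2) \<zeta> = \<alpha>}"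

definition exceptional :: "nat \<Rightarrow> complex poly \<Rightarrow> complex poly \<Rightarrow> complex \<Rightarrow> bool" where
  "exceptional n p1 p2 \<alpha> \<longleftrightarrow> exc_points n p1 p2 \<alpha> \<noteq> {}"

definition B_num0 :: "nat \<Rightarrow> complex poly \<Rightarrow> complex poly \<Rightarrow> complex \<Rightarrow> complex poly" where
  "B_num0 n p1 p2 \<alpha> = refl_poly n p1 - smult \<alpha> p2"
definition B_den0 :: "nat \<Rightarrow> complex poly \<Rightarrow> complex poly \<Rightarrow> complex \<Rightarrow> complex poly" where
  "B_den0 n p1 p2 \<alpha> = smult \<alpha> p1 - refl_poly n p2"
definition B_num :: "nat \<Rightarrow> complex poly \<Rightarrow> complex poly \<Rightarrow> complex \<Rightarrow> complex poly" where
  "B_num n p1 p2 \<alpha> = B_num0 n p1 p2 \<alpha> div gcd (B_num0 n p1 p2 \<alpha>) (B_den0 n p1 p2 \<alpha>)"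
definition B_den :: "nat \<Rightarrow> complex poly \<Rightarrow> complex poly \<Rightarrow> complex \<Rightarrow> complex poly" where
  "B_den n p1 p2 \<alpha> = B_den0 n p1 p2 \<alpha> div gcd (B_num0 n p1 p2 \<alpha>) (B_den0 n p1 p2 \<alpha>)"

definition B_fun :: "nat \<Rightarrow> complex poly \<Rightarrow> complex poly \<Rightarrow> complex \<Rightarrow> complex \<Rightarrow> complex" where
  "B_fun n p1 p2 \<alpha> z = poly (B_num n p1 p2 \<alpha>) z / poly (B_den n p1 p2 \<alpha>) z"

definition fbp_of_degree :: "complex poly \<Rightarrow> complex poly \<Rightarrow> nat \<Rightarrow> bool" where
  "fbp_of_degree N D d \<longleftrightarrow> D \<noteq> 0 \<and> (\<exists>c as. cmod c = 1 \<and> length as = d \<and> (\<forall>a\<in>set as. cmod a < 1) \<and>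
     (\<forall>z. poly D z \<noteq> 0 \<and> (\<forall>a\<in>set as. 1 - cnj a * z \<noteq> 0) \<longrightarrow>
        poly N z / poly D z = c * (\<Prod>a\<leftarrow>as. (z - a) / (1 - cnj a * z))))"

definition is_fbp :: "complex poly \<Rightarrow> complex poly \<Rightarrow> bool" where
  "is_fbp N D \<longleftrightarrow> (\<exists>d. fbp_of_degree N D d)"

definition E_set :: "nat \<Rightarrow> complex poly \<Rightarrow> complex poly \<Rightarrow> complex \<Rightarrow> (complex \<times> complex) set" where
  "E_set n p1 p2 \<alpha> = {(\<zeta>, cnj (B_fun n p1 p2 \<alpha> \<zeta>)) | \<zeta>. \<zeta> \<in> circle}"

definition C_set :: "nat \<Rightarrow> complex poly \<Rightarrow> complex poly \<Rightarrow> complex \<Rightarrow> (complex \<times> complex) set" where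
  "C_set n p1 p2 \<alpha> = {z. fst z \<in> circle \<and> snd z \<in> circle \<and> ptval n p1 p2 z = \<alpha> * pval p1 p2 z}"

definition line_set :: "complex \<Rightarrow> (complex \<times> complex) set" where
  "line_set \<tau> = {\<tau>} \<times> circle"

end

theory Submission
  imports Defs "HOL-Complex_Analysis.Complex_Analysis"
begin

text \<open>Write \<open>tp\<^sub>i = refl_poly n p\<^sub>i\<close> for the reflections. Stability of \<open>p\<close> on \<open>\<bbbD>\<^sup>2\<close> gives
  \<open>|p\<^sub>2| \<le> |p\<^sub>1|\<close> on the closed disc and, by the maximum modulus principle, \<open>|tp\<^sub>2| \<le> |p\<^sub>1|\<close> on the
  disc. The numerator \<open>N\<^sub>\<alpha> = tp\<^sub>1 - \<alpha> p\<^sub>2\<close> is \<open>\<alpha>\<close> times the reflection of the denominator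
  \<open>D\<^sub>\<alpha> = \<alpha> p\<^sub>1 - tp\<^sub>2\<close>, and \<open>|\<alpha> p\<^sub>1 - D\<^sub>\<alpha>| \<le> |p\<^sub>1|\<close> forces \<open>D\<^sub>\<alpha>\<close> to have no zeros in the disc and only
  simple zeros on the circle. Hence \<open>B\<^sub>\<alpha> = N\<^sub>\<alpha> / D\<^sub>\<alpha>\<close> is a Blaschke product whose degree drops by one
  for each zero of \<open>D\<^sub>\<alpha>\<close> on the circle. On \<open>\<bbbT>\<^sup>2\<close> the equation \<open>tp = \<alpha> p\<close> reads
  \<open>z\<^sub>2 N\<^sub>\<alpha>(z\<^sub>1) = D\<^sub>\<alpha>(z\<^sub>1)\<close>: away from the common circle zeros \<open>\<tau>\<close> of \<open>N\<^sub>\<alpha>\<close> and \<open>D\<^sub>\<alpha>\<close> it describes the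
  graph of \<open>cnj B\<^sub>\<alpha>\<close>, and over each such \<open>\<tau>\<close> it holds on the whole circle. Finally these \<open>\<tau>\<close> are
  exactly the first coordinates of the torus zeros \<open>(\<tau>, \<lambda>)\<close> of \<open>p\<close> with \<open>\<phi>\<^sup>*(\<tau>, \<lambda>) = \<alpha>\<close>, because
  the nontangential limit of \<open>\<phi>\<close> there is \<open>tp\<^sub>1(\<tau>) / p\<^sub>2(\<tau>)\<close>.\<close>

section \<open>Reflected polynomials\<close>

lemma coeff_refl_poly:
  "coeff (refl_poly n q) k = (if k \<le> n then cnj (coeff q (n - k)) else 0)"
  unfolding refl_poly_def coeff_Poly_eq nth_default_def by (simp add: rev_nth del: upt_Suc)

lemma degree_refl_poly_le: "degree (refl_poly n q) \<le> n"
  by (rule degree_le) (auto simp: coeff_refl_poly)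

lemma poly_altdef_le:
  fixes p :: "'a :: comm_semiring_1 poly"
  assumes "degree p \<le> m"
  shows "poly p x = (\<Sum>i\<le>m. coeff p i * x ^ i)"
proof -
  have "(\<Sum>i\<le>degree p. coeff p i * x ^ i) = (\<Sum>i\<le>m. coeff p i * x ^ i)"
    by (rule sum.mono_neutral_left) (use assms in \<open>auto simp: coeff_eq_0\<close>)
  thus ?thesis by (simp add: poly_altdef)
qed

lemma poly_refl_poly:
  assumes "degree q \<le> n" "z \<noteq> 0"
  shows "poly (refl_poly n q) z = z ^ n * cnj (poly q (1 / cnj z))"
proof -
  have "poly (refl_poly n q) z = (\<Sum>k\<le>n. cnj (coeff q (n - k)) * z ^ k)"
    by (subst poly_altdef_le[OF degree_refl_poly_le]) (auto simp: coeff_refl_poly intro: sum.cong)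
  also have "\<dots> = (\<Sum>j\<le>n. cnj (coeff q j) * z ^ (n - j))"
    by (rule sum.reindex_bij_witness[where i="\<lambda>j. n - j" and j="\<lambda>k. n - k"]) auto
  also have "\<dots> = z ^ n * (\<Sum>j\<le>n. cnj (coeff q j) * (1 / z) ^ j)"
    unfolding sum_distrib_left by (rule sum.cong) (auto simp: power_diff assms(2) field_simps)
  also have "(\<Sum>j\<le>n. cnj (coeff q j) * (1 / z) ^ j) = cnj (poly q (1 / cnj z))"
    by (subst poly_altdef_le[OF assms(1)]) simp
  finally show ?thesis .
qed

lemma unimodular_mult_cnj: "cmod z = 1 \<Longrightarrow> z * cnj z = 1"
  using complex_norm_square[of z] by simp

lemma poly_refl_poly_circle:
  assumes "degree q \<le> n" "cmod z = 1"
  shows "poly (refl_poly n q) z = z ^ n * cnj (poly q z)"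
proof -
  have "z \<noteq> 0" using assms(2) by auto
  moreover have "1 / cnj z = z" using divide_conv_cnj[of "cnj z" 1] assms(2) by simp
  ultimately show ?thesis using poly_refl_poly[OF assms(1)] by simp
qed

lemma cmod_poly_refl_poly_circle:
  "degree q \<le> n \<Longrightarrow> cmod z = 1 \<Longrightarrow> cmod (poly (refl_poly n q) z) = cmod (poly q z)"
  by (simp add: poly_refl_poly_circle norm_mult norm_power)

lemma poly_eq_if_eq_off_0:
  fixes P Q :: "complex poly"
  assumes "\<And>z. z \<noteq> 0 \<Longrightarrow> poly P z = poly Q z"
  shows "P = Q"
proof (rule ccontr)
  assume "P \<noteq> Q"
  hence "finite {z. poly (P - Q) z = 0}" by (intro poly_roots_finite) simp
  moreover have "- {0} \<subseteq> {z. poly (P - Q) z = 0}" using assms by auto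
  ultimately have "finite (insert 0 (- {0 :: complex}))" by (simp add: finite_subset)
  moreover have "insert 0 (- {0}) = (UNIV :: complex set)" by auto
  ultimately show False using infinite_UNIV_char_0[where 'a = complex] by simp
qed

lemma refl_poly_refl_poly: "degree q \<le> n \<Longrightarrow> refl_poly n (refl_poly n q) = q"
  by (rule poly_eqI) (auto simp: coeff_refl_poly coeff_eq_0)

lemma refl_poly_0 [simp]: "refl_poly n 0 = 0"
  by (rule poly_eqI) (simp add: coeff_refl_poly)

lemma refl_poly_minus: "refl_poly n (- a) = - refl_poly n a"
  by (rule poly_eqI) (simp add: coeff_refl_poly)

lemma refl_poly_diff: "refl_poly n (a - b) = refl_poly n a - refl_poly n b"
  by (rule poly_eqI) (auto simp: coeff_refl_poly)

lemma refl_poly_smult: "refl_poly n (smult c a) = smult (cnj c) (refl_poly n a)"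
  by (rule poly_eqI) (auto simp: coeff_refl_poly)

lemma refl_poly_mult:
  assumes "degree A \<le> m" "degree B \<le> k"
  shows "refl_poly (m + k) (A * B) = refl_poly m A * refl_poly k B"
proof (rule poly_eq_if_eq_off_0)
  fix z :: complex assume z: "z \<noteq> 0"
  have "degree (A * B) \<le> m + k" using assms degree_mult_le[of A B] by linarith
  thus "poly (refl_poly (m + k) (A * B)) z = poly (refl_poly m A * refl_poly k B) z"
    by (simp add: poly_refl_poly assms z power_add)
qed

lemma refl_poly_linear: "refl_poly 1 [:-a, 1:] = [:1, - cnj a:]"
  by (rule poly_eqI) (auto simp: coeff_refl_poly coeff_pCons split: nat.splits)

lemma refl_poly_const: "refl_poly n [:c:] = monom (cnj c) n"
  by (rule poly_eqI) (auto simp: coeff_refl_poly coeff_pCons split: nat.splits)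

lemma refl_poly_linear_factor:
  assumes "cmod \<tau> = 1" "degree D \<le> m"
  shows "refl_poly (Suc m) ([:-\<tau>, 1:] * D) = smult (- cnj \<tau>) ([:-\<tau>, 1:] * refl_poly m D)"
proof -
  have "refl_poly (1 + m) ([:-\<tau>, 1:] * D) = refl_poly 1 [:-\<tau>, 1:] * refl_poly m D"
    by (rule refl_poly_mult) (simp_all add: assms(2))
  also have "refl_poly 1 [:-\<tau>, 1:] = smult (- cnj \<tau>) [:-\<tau>, 1:]"
    unfolding refl_poly_linear using unimodular_mult_cnj[OF assms(1)] by (simp add: mult.commute)
  finally show ?thesis unfolding Suc_eq_plus1_left by (simp only: mult_smult_left)
qed

section \<open>Boundary behaviour on the unit disc\<close>

lemma cmod_diff_square: "cmod (a - d) ^ 2 = cmod a ^ 2 - 2 * Re (cnj a * d) + cmod d ^ 2"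
  by (simp only: cmod_power2) (simp add: power2_eq_square algebra_simps)

lemma poly_eq_0_if_vanishes_on_disc:
  fixes P :: "complex poly"
  assumes "\<And>w. cmod w < 1 \<Longrightarrow> poly P w = 0"
  shows "P = 0"
proof (rule ccontr)
  assume "P \<noteq> 0"
  hence "finite {w. poly P w = 0}" by (rule poly_roots_finite)
  moreover have "ball 0 1 \<subseteq> {w. poly P w = 0}" using assms by auto
  moreover have "infinite (ball (0::complex) 1)"
    using islimpt_eq_infinite_ball[of "0::complex" UNIV] by (simp add: islimpt_UNIV)
  ultimately show False using finite_subset by blast
qed

lemma le_on_closed_disc_if_le_on_disc:
  fixes f g :: "complex \<Rightarrow> real"
  assumes "\<And>w. cmod w < 1 \<Longrightarrow> f w \<le> g w" "cmod z \<le> 1" "isCont f z" "isCont g z"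
  shows "f z \<le> g z"
proof -
  have radial: "((\<lambda>t::real. of_real t * z) \<longlongrightarrow> z) (at_left 1)"
    using tendsto_mult[OF tendsto_of_real[OF tendsto_ident_at[of 1 "{..<1}"]] tendsto_const[of z]]
    by simp
  have lim: "((\<lambda>t. g (of_real t * z) - f (of_real t * z)) \<longlongrightarrow> g z - f z) (at_left 1)"
    by (rule tendsto_diff; rule isCont_tendsto_compose[OF _ radial]) (use assms in auto)
  have "eventually (\<lambda>t. 0 \<le> g (of_real t * z) - f (of_real t * z)) (at_left (1::real))"
    using eventually_at_left_real[of 0 "1::real", OF zero_less_one]
  proof (rule eventually_mono)
    fix t :: real assume t: "t \<in> {0<..<1}"
    hence "cmod (of_real t * z) \<le> t"
      using assms(2) mult_left_le[of "cmod z" t] by (simp add: norm_mult)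
    hence "cmod (of_real t * z) < 1" using t by simp
    thus "0 \<le> g (of_real t * z) - f (of_real t * z)" using assms(1) by fastforce
  qed
  from tendsto_lowerbound[OF lim this] show ?thesis by simp
qed

lemma cmod_1_minus_real_mult_lt_1:
  assumes "0 < t" "t * cmod w ^ 2 < 2 * Re w"
  shows "cmod (1 - of_real t * w) < 1"
proof -
  have "cmod (1 - of_real t * w) ^ 2 = 1 - 2 * t * Re w + t ^ 2 * cmod w ^ 2"
    by (simp add: cmod_diff_square norm_mult power_mult_distrib)
  also have "\<dots> < 1"
  proof -
    have "t * (t * cmod w ^ 2) < t * (2 * Re w)" using assms by simp
    thus ?thesis by (simp add: power2_eq_square algebra_simps)
  qed
  finally show ?thesis by (metis abs_norm_cancel abs_square_less_1)
qed

text \<open>Approach the boundary point \<open>\<tau>\<close> along the segment \<open>\<tau> (1 - t w)\<close>, which lies in the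
  disc for small \<open>t > 0\<close> when \<open>Re w > 0\<close>; there \<open>(z - \<tau>)\<^sup>k = t\<^sup>k (-\<tau>)\<^sup>k w\<^sup>k\<close>.\<close>
lemma Re_nonneg_in_inward_directions:
  fixes G :: "complex \<Rightarrow> complex" and k :: nat
  assumes \<tau>: "cmod \<tau> = 1" and cont: "isCont G \<tau>"
    and nonneg: "\<And>z. cmod z < 1 \<Longrightarrow> 0 \<le> Re (G z * (z - \<tau>) ^ k)"
    and w: "Re w > 0"
  shows "0 \<le> Re (G \<tau> * (-\<tau>) ^ k * w ^ k)"
proof -
  define z where "z = (\<lambda>t::real. \<tau> - of_real t * \<tau> * w)"
  have nw: "cmod w ^ 2 > 0" using w by auto
  define b where "b = 2 * Re w / cmod w ^ 2"
  have b: "b > 0" using w nw by (simp add: b_def)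
  have "(z \<longlongrightarrow> \<tau> - of_real 0 * \<tau> * w) (at_right 0)"
    unfolding z_def by (intro tendsto_intros)
  hence "((\<lambda>t. Re (G (z t) * (-\<tau>) ^ k * w ^ k)) \<longlongrightarrow> Re (G \<tau> * (-\<tau>) ^ k * w ^ k)) (at_right 0)"
    by (intro tendsto_intros isCont_tendsto_compose[OF cont]) simp
  moreover have "eventually (\<lambda>t. 0 \<le> Re (G (z t) * (-\<tau>) ^ k * w ^ k)) (at_right (0::real))"
    using eventually_at_right_real[OF b]
  proof (rule eventually_mono)
    fix t :: real assume t: "t \<in> {0<..<b}"
    have "t * cmod w ^ 2 < 2 * Re w" using t nw by (simp add: b_def pos_less_divide_eq)
    hence "cmod (1 - of_real t * w) < 1" using t by (intro cmod_1_minus_real_mult_lt_1) auto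
    moreover have "z t = \<tau> * (1 - of_real t * w)" by (simp add: z_def algebra_simps)
    ultimately have "cmod (z t) < 1" using \<tau> by (simp add: norm_mult)
    hence "0 \<le> Re (G (z t) * (z t - \<tau>) ^ k)" by (rule nonneg)
    also have "(z t - \<tau>) ^ k = (-\<tau>) ^ k * w ^ k * of_real (t ^ k)"
    proof -
      have "z t - \<tau> = (-\<tau>) * w * of_real t" by (simp add: z_def)
      thus ?thesis by (simp only: power_mult_distrib of_real_power)
    qed
    also have "G (z t) * ((-\<tau>) ^ k * w ^ k * of_real (t ^ k))
        = of_real (t ^ k) * (G (z t) * (-\<tau>) ^ k * w ^ k)"
      by (simp only: mult_ac)
    finally have "0 \<le> t ^ k * Re (G (z t) * (-\<tau>) ^ k * w ^ k)" by simp
    hence "t ^ k * 0 \<le> t ^ k * Re (G (z t) * (-\<tau>) ^ k * w ^ k)" by simp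
    moreover have "t ^ k > 0" using t by simp
    ultimately show "0 \<le> Re (G (z t) * (-\<tau>) ^ k * w ^ k)" by (simp only: mult_le_cancel_left_pos)
  qed
  ultimately show ?thesis by (rule tendsto_lowerbound) simp
qed

lemma Re_mult_nonneg_on_right_halfplane:
  assumes "\<And>w. Re w > 0 \<Longrightarrow> 0 \<le> Re (C * w)"
  shows "0 \<le> Re C \<and> Im C = 0"
proof -
  have M: "0 \<le> Re C - M * Im C" for M
    using assms[of "1 + \<i> * of_real M"] by (simp add: mult.commute)
  have "Im C = 0"
  proof (rule ccontr)
    assume "Im C \<noteq> 0"
    thus False using M[of "(Re C + 1) / Im C"] by (simp add: field_simps)
  qed
  thus ?thesis using M[of 0] by simp
qed

text \<open>For \<open>k \<ge> 2\<close> the \<open>k\<close>-th power maps the right half plane onto a sector of opening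
  \<open>\<ge> 3\<pi>/2\<close>, containing \<open>\<plusminus>v\<close> and \<open>\<plusminus>i v\<close> for \<open>v = cis (-\<pi>/4)\<close>.\<close>
lemma Re_mult_power_nonneg_on_right_halfplane:
  assumes hp: "\<And>w. Re w > 0 \<Longrightarrow> 0 \<le> Re (C * w ^ k)" and k: "k \<ge> 2"
  shows "C = 0"
proof -
  have sector: "0 \<le> Re (C * cis \<phi>)" if "\<bar>\<phi>\<bar> \<le> 3 * pi / 4" for \<phi>
  proof -
    have "3 * pi * 2 \<le> 3 * pi * real k" using k by (intro mult_left_mono) auto
    hence "\<bar>\<phi>\<bar> * 8 \<le> 3 * pi * real k" using that by linarith
    moreover have "0 < pi * real k" using k by simp
    ultimately have "\<bar>\<phi>\<bar> * 2 < pi * real k" by linarith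
    hence "\<bar>\<phi> / real k\<bar> < pi / 2" using k by (simp add: abs_divide divide_less_eq)
    hence "cos (\<phi> / real k) > 0" by (intro cos_gt_zero_pi) linarith+
    hence "0 \<le> Re (C * cis (\<phi> / real k) ^ k)" by (intro hp) simp
    also have "cis (\<phi> / real k) ^ k = cis \<phi>" using k by (simp add: Complex.DeMoivre)
    finally show ?thesis .
  qed
  define v where "v = cis (- pi / 4)"
  have "cis (3 * pi / 4) = - v" unfolding v_def minus_cis by (simp add: field_simps)
  moreover have "cis (pi / 4) = \<i> * v"
    unfolding v_def using cis_mult[of "-pi/4" "pi/2"] by (simp add: field_simps)
  moreover have "cis (- (3 * pi / 4)) = - (\<i> * v)"
    unfolding v_def using cis_mult[of "-pi/4" "-(pi/2)"] by (simp add: field_simps)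
  ultimately have "0 \<le> Re (C * v)" "0 \<le> Re (C * - v)" "0 \<le> Re (C * (\<i> * v))" "0 \<le> Re (C * - (\<i> * v))"
    using sector[of "-pi/4"] sector[of "3*pi/4"] sector[of "pi/4"] sector[of "-(3*pi/4)"] pi_gt_zero
    by (simp_all add: v_def)
  hence "C * v = 0" by (auto simp: complex_eq_iff algebra_simps)
  thus "C = 0" by (simp add: v_def)
qed

text \<open>The hypothesis says \<open>Re (cnj (a P) G) \<ge> |G|\<^sup>2/2 \<ge> 0\<close> on the disc. At a zero of order \<open>k\<close>
  on the circle, \<open>(z - \<tau>)\<^sup>k\<close> covers a sector of opening \<open>k\<pi>\<close> as \<open>z\<close> ranges near \<open>\<tau>\<close> in the
  disc, which forces \<open>k = 1\<close> and pins down the argument of the derivative.\<close>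
lemma simple_root_on_circle:
  fixes P G :: "complex poly"
  assumes a: "cmod a = 1"
    and le: "\<And>z. cmod z < 1 \<Longrightarrow> cmod (a * poly P z - poly G z) \<le> cmod (poly P z)"
    and G: "G \<noteq> 0" and \<tau>: "cmod \<tau> = 1" "poly P \<tau> \<noteq> 0" "poly G \<tau> = 0"
  obtains G1 where "G = [:-\<tau>, 1:] * G1" "poly G1 \<tau> \<noteq> 0"
    "Re (cnj (a * poly P \<tau>) * poly G1 \<tau> * \<tau>) < 0" "Im (cnj (a * poly P \<tau>) * poly G1 \<tau> * \<tau>) = 0"
proof -
  define k where "k = order \<tau> G"
  have k1: "k \<ge> 1" using \<tau> G order_root[of G \<tau>] by (simp add: k_def)
  obtain q where q: "G = [:-\<tau>, 1:] ^ k * q" "\<not> [:-\<tau>, 1:] dvd q"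
    using order_decomp[OF G, of \<tau>] by (auto simp: k_def)
  have q\<tau>: "poly q \<tau> \<noteq> 0" using q(2) by (simp add: poly_eq_0_iff_dvd)
  define F where "F = (\<lambda>z. cnj (a * poly P z) * poly q z)"
  have nonneg: "0 \<le> Re (F z * (z - \<tau>) ^ k)" if z: "cmod z < 1" for z
  proof -
    have "cmod (a * poly P z - poly G z) ^ 2 \<le> cmod (a * poly P z) ^ 2"
      using le[OF z] a by (simp add: norm_mult power_mono)
    hence "cmod (poly G z) ^ 2 \<le> 2 * Re (cnj (a * poly P z) * poly G z)"
      unfolding cmod_diff_square by linarith
    hence "0 \<le> Re (cnj (a * poly P z) * poly G z)"
      by (smt (verit) zero_le_power2)
    thus ?thesis by (simp add: F_def q(1) poly_power algebra_simps)
  qed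
  have "isCont F \<tau>" unfolding F_def by (intro continuous_intros)
  hence hp: "0 \<le> Re ((F \<tau> * (-\<tau>) ^ k) * w ^ k)" if "Re w > 0" for w
    using Re_nonneg_in_inward_directions[OF \<tau>(1) _ nonneg that] by (simp add: mult.assoc)
  have F\<tau>: "F \<tau> * (-\<tau>) ^ k \<noteq> 0" using \<tau> q\<tau> a by (auto simp: F_def)
  have k: "k = 1"
    using Re_mult_power_nonneg_on_right_halfplane[OF hp] F\<tau> k1 by (cases "k \<ge> 2") auto
  have "0 \<le> Re (- (F \<tau> * \<tau>)) \<and> Im (- (F \<tau> * \<tau>)) = 0"
    using Re_mult_nonneg_on_right_halfplane[of "F \<tau> * (-\<tau>) ^ k"] hp k by simp
  moreover have "F \<tau> * \<tau> \<noteq> 0" using F\<tau> k by simp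
  ultimately have "Re (F \<tau> * \<tau>) < 0" "Im (F \<tau> * \<tau>) = 0" by (auto simp: complex_eq_iff)
  with q(1) q\<tau> k show ?thesis by (intro that[of q]) (simp_all add: F_def)
qed

section \<open>Blaschke factorization of reflected polynomials\<close>

definition blaschke_numer :: "complex list \<Rightarrow> complex poly" where
  "blaschke_numer as = (\<Prod>a\<leftarrow>as. [:-a, 1:])"

definition blaschke_denom :: "complex list \<Rightarrow> complex poly" where
  "blaschke_denom as = (\<Prod>a\<leftarrow>as. [:1, - cnj a:])"

definition circle_roots :: "complex poly \<Rightarrow> complex set" where
  "circle_roots D = {\<tau>. cmod \<tau> = 1 \<and> poly D \<tau> = 0}"

lemma blaschke_numer_simps [simp]:
  "blaschke_numer [] = 1" "blaschke_numer (a # as) = [:-a, 1:] * blaschke_numer as"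
  by (simp_all add: blaschke_numer_def)

lemma blaschke_denom_simps [simp]:
  "blaschke_denom [] = 1" "blaschke_denom (a # as) = [:1, - cnj a:] * blaschke_denom as"
  by (simp_all add: blaschke_denom_def)

lemma poly_blaschke_numer: "poly (blaschke_numer as) z = (\<Prod>a\<leftarrow>as. z - a)"
  by (induction as) (auto simp: algebra_simps)

lemma poly_blaschke_denom: "poly (blaschke_denom as) z = (\<Prod>a\<leftarrow>as. 1 - cnj a * z)"
  by (induction as) (auto simp: algebra_simps)

lemma blaschke_numer_replicate_0: "blaschke_numer (replicate m 0) = monom 1 m"
  by (induction m) (auto simp: monom_Suc monom_0 pCons_one)

lemma blaschke_denom_replicate_0: "blaschke_denom (replicate m 0) = 1"
  by (induction m) (auto simp: pCons_one)

lemma finite_circle_roots: "D \<noteq> 0 \<Longrightarrow> finite (circle_roots D)"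
  unfolding circle_roots_def by (rule finite_subset[OF _ poly_roots_finite]) auto

lemma linear_factor_of_degree_Suc:
  fixes D :: "complex poly"
  assumes "degree D = Suc k"
  obtains z0 D' where "D = [:-z0, 1:] * D'" "D' \<noteq> 0" "degree D' = k"
proof -
  have "\<not> constant (poly D)" by (metis constant_degree assms nat.distinct(1))
  then obtain z0 where "poly D z0 = 0"
    using Fundamental_Theorem_Algebra.fundamental_theorem_of_algebra by blast
  hence "[:-z0, 1:] dvd D" by (simp add: poly_eq_0_iff_dvd)
  then obtain D' where D': "D = [:-z0, 1:] * D'" by (rule dvdE)
  have "D' \<noteq> 0" using assms D' by (metis degree_0 mult_zero_right nat.distinct(1))
  moreover from this have "degree D' = k" using assms unfolding D' by (subst (asm) degree_mult_eq) auto
  ultimately show ?thesis using that D' by blast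
qed

lemma poly_nonzero_if_not_square_dvd:
  fixes D :: "complex poly"
  assumes "\<not> [:-z0, 1:] ^ 2 dvd [:-z0, 1:] * D"
  shows "poly D z0 \<noteq> 0"
proof
  assume "poly D z0 = 0"
  hence "[:-z0, 1:] * [:-z0, 1:] dvd [:-z0, 1:] * D"
    by (intro mult_dvd_mono) (simp_all add: poly_eq_0_iff_dvd)
  thus False using assms by (simp add: power2_eq_square)
qed

lemma circle_roots_linear_factor:
  "circle_roots ([:-z0, 1:] * D) = (if cmod z0 = 1 then insert z0 (circle_roots D) else circle_roots D)"
  by (auto simp: circle_roots_def)

lemma card_circle_roots_le_degree:
  assumes "D \<noteq> 0"
  shows "card (circle_roots D) \<le> degree D"
proof -
  have "card (circle_roots D) \<le> card {x. poly D x = 0}"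
    by (intro card_mono poly_roots_finite assms) (auto simp: circle_roots_def)
  also have "\<dots> \<le> degree D" by (rule card_poly_roots_bound[OF assms])
  finally show ?thesis .
qed

lemma blaschke_step_circle:
  assumes "cmod z0 = 1" "degree D \<le> m"
    and "refl_poly m D * blaschke_denom as = smult c (blaschke_numer as * D)"
  shows "refl_poly (Suc m) ([:-z0, 1:] * D) * blaschke_denom as
      = smult (- cnj z0 * c) (blaschke_numer as * ([:-z0, 1:] * D))"
proof -
  have "refl_poly (Suc m) ([:-z0, 1:] * D) * blaschke_denom as
      = smult (- cnj z0) [:-z0, 1:] * (refl_poly m D * blaschke_denom as)"
    by (simp only: refl_poly_linear_factor[OF assms(1,2)] mult_smult_left mult.assoc)
  also have "\<dots> = smult (- cnj z0 * c) (blaschke_numer as * ([:-z0, 1:] * D))"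
    unfolding assms(3) by (simp only: mult_smult_left mult_smult_right smult_smult mult_ac)
  finally show ?thesis .
qed

lemma blaschke_step_outside:
  assumes "cmod z0 > 1" "degree D \<le> m"
    and "refl_poly m D * blaschke_denom as = smult c (blaschke_numer as * D)"
  shows "refl_poly (Suc m) ([:-z0, 1:] * D) * blaschke_denom (1 / cnj z0 # as)
      = smult (cnj z0 / z0 * c) (blaschke_numer (1 / cnj z0 # as) * ([:-z0, 1:] * D))"
proof -
  define a where "a = 1 / cnj z0"
  have z0: "z0 \<noteq> 0" using assms(1) by auto
  have "refl_poly (Suc m) ([:-z0, 1:] * D) = [:1, - cnj z0:] * refl_poly m D"
    unfolding Suc_eq_plus1_left refl_poly_linear[symmetric]
    by (rule refl_poly_mult) (simp_all add: assms(2))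
  hence "refl_poly (Suc m) ([:-z0, 1:] * D) * blaschke_denom (a # as)
      = ([:1, - cnj z0:] * [:1, - cnj a:]) * (refl_poly m D * blaschke_denom as)"
    by (simp only: blaschke_denom_simps mult_ac)
  also have "[:1, - cnj z0:] * [:1, - cnj a:] = smult (cnj z0 / z0) ([:-a, 1:] * [:-z0, 1:])"
    by (rule poly_eq_if_eq_off_0) (use z0 in \<open>simp add: a_def field_simps\<close>)
  also have "smult (cnj z0 / z0) ([:-a, 1:] * [:-z0, 1:]) * (refl_poly m D * blaschke_denom as)
      = smult (cnj z0 / z0 * c) (blaschke_numer (a # as) * ([:-z0, 1:] * D))"
    unfolding assms(3)
    by (simp only: blaschke_numer_simps mult_smult_left mult_smult_right smult_smult mult_ac)
  finally show ?thesis unfolding a_def .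
qed

text \<open>Reflecting a factor \<open>z - z\<^sub>0\<close> with
  \<open>|z\<^sub>0| = 1\<close> only produces the unimodular constant \<open>-cnj z\<^sub>0\<close>, while a factor with \<open>|z\<^sub>0| > 1\<close>
  produces the Blaschke factor with zero \<open>1 / cnj z\<^sub>0\<close>.\<close>
lemma refl_poly_blaschke_factorization:
  fixes D :: "complex poly"
  assumes "D \<noteq> 0" "degree D \<le> m" "\<forall>z. cmod z < 1 \<longrightarrow> poly D z \<noteq> 0"
    "\<forall>\<tau>. cmod \<tau> = 1 \<longrightarrow> \<not> [:-\<tau>, 1:] ^ 2 dvd D"
  shows "\<exists>c as. cmod c = 1 \<and> length as = m - card (circle_roots D) \<and> (\<forall>a\<in>set as. cmod a < 1) \<and>
    refl_poly m D * blaschke_denom as = smult c (blaschke_numer as * D)"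
  using assms
proof (induction "degree D" arbitrary: D m)
  case 0
  then obtain d where d: "D = [:d:]" by (metis degree_eq_zeroE)
  with 0 have "d \<noteq> 0" by simp
  hence "circle_roots D = {}" using d by (auto simp: circle_roots_def)
  moreover have "refl_poly m D * blaschke_denom (replicate m 0)
      = smult (cnj d / d) (blaschke_numer (replicate m 0) * D)"
    using d \<open>d \<noteq> 0\<close> by (simp add: refl_poly_const blaschke_numer_replicate_0 blaschke_denom_replicate_0 smult_monom)
  moreover have "cmod (cnj d / d) = 1" using \<open>d \<noteq> 0\<close> by (simp add: norm_divide)
  ultimately show ?case by (intro exI[of _ "cnj d / d"] exI[of _ "replicate m 0"]) auto
next
  case (Suc k)
  obtain z0 D' where D': "D = [:-z0, 1:] * D'" and D'0: "D' \<noteq> 0" and degD': "degree D' = k"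
    using linear_factor_of_degree_Suc[OF Suc(2)[symmetric]] .
  obtain m' where m': "m = Suc m'" "degree D' \<le> m'" using Suc(2,4) degD' by (cases m) auto
  have "[:-\<tau>, 1:] ^ 2 dvd D" if "[:-\<tau>, 1:] ^ 2 dvd D'" for \<tau>
    using that unfolding D' by (intro dvd_mult)
  hence "\<forall>\<tau>. cmod \<tau> = 1 \<longrightarrow> \<not> [:-\<tau>, 1:] ^ 2 dvd D'" using Suc(6) by blast
  moreover have "\<forall>z. cmod z < 1 \<longrightarrow> poly D' z \<noteq> 0" using Suc(5) by (auto simp: D')
  ultimately obtain c as where IH: "cmod c = 1" "length as = m' - card (circle_roots D')"
      "\<forall>a\<in>set as. cmod a < 1" "refl_poly m' D' * blaschke_denom as = smult c (blaschke_numer as * D')"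
    using Suc(1)[OF degD'[symmetric] D'0 m'(2)] by blast
  have "cmod z0 \<ge> 1" using Suc(5) by (auto simp: D' not_less[symmetric])
  then consider "cmod z0 = 1" | "cmod z0 > 1" by linarith
  thus ?case
  proof cases
    case 1
    have "poly D' z0 \<noteq> 0" using Suc(6) 1 unfolding D' by (intro poly_nonzero_if_not_square_dvd) blast
    hence "z0 \<notin> circle_roots D'" by (simp add: circle_roots_def)
    hence "card (circle_roots D) = Suc (card (circle_roots D'))"
      using 1 finite_circle_roots[OF D'0] unfolding D' circle_roots_linear_factor by simp
    hence "length as = m - card (circle_roots D)" using IH(2) m'(1) by simp
    moreover have "cmod (- cnj z0 * c) = 1" using IH(1) 1 by (simp add: norm_mult)
    moreover have "refl_poly m D * blaschke_denom as = smult (- cnj z0 * c) (blaschke_numer as * D)"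
      using blaschke_step_circle[OF 1 m'(2) IH(4)] by (simp only: D' m'(1))
    ultimately show ?thesis using IH(3) by blast
  next
    case 2
    have "card (circle_roots D') \<le> m'" using card_circle_roots_le_degree[OF D'0] m'(2) by linarith
    moreover have "circle_roots D = circle_roots D'" using 2 unfolding D' circle_roots_linear_factor by simp
    ultimately have "length (1 / cnj z0 # as) = m - card (circle_roots D)"
      using IH(2) m'(1) by simp
    moreover have "cmod (cnj z0 / z0 * c) = 1" "cmod (1 / cnj z0) < 1"
      using IH(1) 2 by (auto simp: norm_mult norm_divide divide_less_eq)
    moreover have "refl_poly m D * blaschke_denom (1 / cnj z0 # as)
        = smult (cnj z0 / z0 * c) (blaschke_numer (1 / cnj z0 # as) * D)"
      using blaschke_step_outside[OF 2 m'(2) IH(4)] by (simp only: D' m'(1))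
    ultimately show ?thesis using IH(3) by (intro exI[of _ "cnj z0 / z0 * c"] exI[of _ "1 / cnj z0 # as"]) auto
  qed
qed

lemma fbp_of_degreeI:
  assumes "N * blaschke_denom as = smult c (blaschke_numer as * D)"
    and "D \<noteq> 0" "cmod c = 1" "\<forall>a\<in>set as. cmod a < 1"
  shows "fbp_of_degree N D (length as)"
proof -
  have "poly N z / poly D z = c * (\<Prod>a\<leftarrow>as. (z - a) / (1 - cnj a * z))"
    if z: "poly D z \<noteq> 0" "\<forall>a\<in>set as. 1 - cnj a * z \<noteq> 0" for z
  proof -
    define u v where "u = poly (blaschke_numer as) z" and "v = poly (blaschke_denom as) z"
    have "v \<noteq> 0" using z(2) by (auto simp: v_def poly_blaschke_denom prod_list_zero_iff)
    moreover have "poly N z * v = c * u * poly D z"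
      using arg_cong[OF assms(1), of "\<lambda>p. poly p z"] by (simp add: u_def v_def)
    moreover have "(\<Prod>a\<leftarrow>as. (z - a) / (1 - cnj a * z)) = u / v"
      unfolding u_def v_def poly_blaschke_numer poly_blaschke_denom by (induction as) simp_all
    ultimately show ?thesis using z(1) by (simp only:) (simp add: field_simps)
  qed
  thus ?thesis unfolding fbp_of_degree_def using assms(2-4) by blast
qed

lemma cmod_blaschke_factor_circle:
  assumes "cmod z = 1" "cmod a < 1"
  shows "cmod (1 - cnj a * z) = cmod (z - a)" "1 - cnj a * z \<noteq> 0"
proof -
  have "1 - cnj a * z = z * cnj (z - a)"
    using unimodular_mult_cnj[OF assms(1)] by (simp add: algebra_simps)
  thus "cmod (1 - cnj a * z) = cmod (z - a)" using assms(1) by (simp only: norm_mult complex_mod_cnj)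
  have "cmod (cnj a * z) < 1" using assms by (simp add: norm_mult)
  thus "1 - cnj a * z \<noteq> 0" by auto
qed

lemma cmod_poly_eq_circle_if_blaschke:
  assumes "N * blaschke_denom as = smult c (blaschke_numer as * D)"
    and "cmod c = 1" "\<forall>a\<in>set as. cmod a < 1" "cmod z = 1"
  shows "cmod (poly N z) = cmod (poly D z)"
proof -
  have "cmod (poly (blaschke_denom as) z) = cmod (poly (blaschke_numer as) z)"
    "poly (blaschke_denom as) z \<noteq> 0"
    unfolding poly_blaschke_numer poly_blaschke_denom using assms(3)
    by (induction as) (auto simp: norm_mult cmod_blaschke_factor_circle[OF assms(4)]
        dest: cmod_blaschke_factor_circle(2)[OF assms(4)])
  moreover from this have "poly (blaschke_numer as) z \<noteq> 0" by (metis norm_eq_zero)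
  moreover have "cmod (poly N z) * cmod (poly (blaschke_denom as) z)
      = cmod (poly (blaschke_numer as) z) * cmod (poly D z)"
    using arg_cong[OF assms(1), of "\<lambda>p. cmod (poly p z)"] assms(2) by (simp add: norm_mult)
  ultimately show ?thesis by simp
qed

section \<open>Consequences of stability\<close>

lemma degree_is_unit_poly_poly:
  "is_unit (q :: 'a :: field poly poly) \<Longrightarrow> degree q = 0 \<and> degree (coeff q 0) = 0"
proof -
  assume "is_unit q"
  then obtain c where c: "q = [:c:]" "is_unit c" by (auto simp: is_unit_poly_iff)
  hence "c \<noteq> 0" by auto
  with c show ?thesis by (simp add: is_unit_iff_degree)
qed

locale rational_inner =
  fixes n :: nat and p1 p2 :: "complex poly"
  assumes n: "n \<ge> 1" and deg_p1: "degree p1 \<le> n" and deg_p2: "degree p2 \<le> n"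
    and no_zeros: "\<And>z1 z2. cmod z1 < 1 \<Longrightarrow> cmod z2 < 1 \<Longrightarrow> pval p1 p2 (z1, z2) \<noteq> 0"
    and tp1_nonzero: "refl_poly n p1 \<noteq> 0"
    and coprime: "\<And>q. q dvd bipoly p1 p2 \<Longrightarrow> q dvd bipoly_tilde n p1 p2 \<Longrightarrow> is_unit q"
begin

abbreviation "tp1 \<equiv> refl_poly n p1"
abbreviation "tp2 \<equiv> refl_poly n p2"

lemma poly_p1_nonzero_disc: "cmod z < 1 \<Longrightarrow> poly p1 z \<noteq> 0"
  using no_zeros[of z 0] by (simp add: pval_def)

lemma cmod_p2_le_p1_disc:
  assumes z: "cmod z < 1"
  shows "cmod (poly p2 z) \<le> cmod (poly p1 z)"
proof (rule ccontr)
  assume "\<not> cmod (poly p2 z) \<le> cmod (poly p1 z)"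
  hence lt: "cmod (poly p1 z) < cmod (poly p2 z)" by simp
  hence "poly p2 z \<noteq> 0" by auto
  hence "pval p1 p2 (z, - poly p1 z / poly p2 z) = 0" by (simp add: pval_def)
  moreover have "cmod (- poly p1 z / poly p2 z) < 1"
    using lt by (simp add: norm_divide divide_less_eq)
  ultimately show False using no_zeros z by blast
qed

lemma cmod_p2_le_p1_closed_disc: "cmod z \<le> 1 \<Longrightarrow> cmod (poly p2 z) \<le> cmod (poly p1 z)"
  by (rule le_on_closed_disc_if_le_on_disc[where f="\<lambda>w. cmod (poly p2 w)" and g="\<lambda>w. cmod (poly p1 w)"])
     (auto intro!: cmod_p2_le_p1_disc continuous_intros)

lemma no_common_root_circle:
  assumes "cmod \<tau> = 1" "poly p1 \<tau> = 0" "poly p2 \<tau> = 0"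
  shows False
proof -
  define r where "r = [:-\<tau>, 1:]"
  have "poly tp1 \<tau> = 0" "poly tp2 \<tau> = 0"
    using assms by (simp_all add: poly_refl_poly_circle deg_p1 deg_p2)
  hence "r dvd p1" "r dvd p2" "r dvd tp1" "r dvd tp2"
    using assms by (simp_all add: r_def poly_eq_0_iff_dvd)
  then obtain a b c d where abcd: "p1 = r * a" "p2 = r * b" "tp1 = r * c" "tp2 = r * d"
    by (elim dvdE)
  have "[:r:] dvd bipoly p1 p2"
    unfolding bipoly_def abcd(1,2) by (rule dvdI[of _ _ "[:a, b:]"]) simp
  moreover have "[:r:] dvd bipoly_tilde n p1 p2"
    unfolding bipoly_tilde_def abcd(3,4) by (rule dvdI[of _ _ "[:d, c:]"]) simp
  ultimately have "is_unit [:r:]" by (rule coprime)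
  thus False using degree_is_unit_poly_poly[of "[:r:]"] by (simp add: r_def)
qed

lemma poly_p1_nonzero_closed_disc:
  assumes "cmod z \<le> 1"
  shows "poly p1 z \<noteq> 0"
proof
  assume p1: "poly p1 z = 0"
  show False
  proof (cases "cmod z < 1")
    case True thus False using poly_p1_nonzero_disc p1 by auto
  next
    case False
    hence "cmod z = 1" using assms by auto
    moreover have "poly p2 z = 0" using cmod_p2_le_p1_closed_disc[OF assms] p1 by simp
    ultimately show False using no_common_root_circle p1 by blast
  qed
qed

text \<open>Maximum modulus applied to \<open>tp2 / p1\<close>, which is bounded by \<open>|p2 / p1| \<le> 1\<close> on the circle.\<close>
lemma cmod_tp2_le_p1_disc:
  assumes "cmod z < 1"
  shows "cmod (poly tp2 z) \<le> cmod (poly p1 z)"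
proof -
  define h where "h = (\<lambda>w. poly tp2 w / poly p1 w)"
  have "h holomorphic_on interior (cball 0 1)" unfolding h_def
    by (intro holomorphic_intros) (auto dest: poly_p1_nonzero_disc)
  moreover have "continuous_on (closure (cball 0 1)) h" unfolding h_def
    by (intro continuous_intros) (auto dest: poly_p1_nonzero_closed_disc)
  moreover have "norm (h w) \<le> 1" if "w \<in> frontier (cball 0 1)" for w
  proof -
    have w: "cmod w = 1" using that by simp
    hence "cmod (poly tp2 w) \<le> cmod (poly p1 w)"
      using cmod_p2_le_p1_closed_disc by (simp add: cmod_poly_refl_poly_circle deg_p2)
    thus ?thesis using poly_p1_nonzero_closed_disc[of w] w by (simp add: h_def norm_divide divide_le_eq)
  qed
  ultimately have "norm (h z) \<le> 1"
    using maximum_modulus_frontier[of h "cball 0 1" 1 z] assms by auto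
  thus ?thesis using poly_p1_nonzero_disc[OF assms] by (simp add: h_def norm_divide divide_le_eq)
qed

section \<open>The polynomials \<open>N\<^sub>\<alpha>\<close> and \<open>D\<^sub>\<alpha>\<close>\<close>

abbreviation "N0 \<alpha> \<equiv> B_num0 n p1 p2 \<alpha>"
abbreviation "D0 \<alpha> \<equiv> B_den0 n p1 p2 \<alpha>"

lemma degree_B_den0_le: "degree (D0 \<alpha>) \<le> n"
  unfolding B_den0_def
  using degree_diff_le[of "smult \<alpha> p1" n tp2] degree_smult_le[of \<alpha> p1] deg_p1 degree_refl_poly_le[of n p2]
  by linarith

lemma B_num0_eq_smult_refl_B_den0:
  assumes "cmod \<alpha> = 1"
  shows "N0 \<alpha> = smult \<alpha> (refl_poly n (D0 \<alpha>))"
proof -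
  have "smult \<alpha> (refl_poly n (D0 \<alpha>)) = smult (\<alpha> * cnj \<alpha>) tp1 - smult \<alpha> p2"
    by (simp add: B_den0_def refl_poly_diff refl_poly_smult refl_poly_refl_poly deg_p2 smult_diff_right)
  thus ?thesis using unimodular_mult_cnj[OF assms] by (simp add: B_num0_def)
qed

lemma cmod_B_num0_eq_B_den0_circle:
  "cmod \<alpha> = 1 \<Longrightarrow> cmod z = 1 \<Longrightarrow> cmod (poly (N0 \<alpha>) z) = cmod (poly (D0 \<alpha>) z)"
  by (simp add: B_num0_eq_smult_refl_B_den0 cmod_poly_refl_poly_circle degree_B_den0_le norm_mult)

lemma B_den0_nonzero:
  assumes "cmod \<alpha> = 1"
  shows "D0 \<alpha> \<noteq> 0"
proof
  assume D0: "D0 \<alpha> = 0"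
  hence "N0 \<alpha> = 0" using B_num0_eq_smult_refl_B_den0[OF assms] by simp
  hence "tp1 = smult \<alpha> p2" "tp2 = smult \<alpha> p1" using D0 by (simp_all add: B_num0_def B_den0_def)
  hence "bipoly_tilde n p1 p2 = [:[:\<alpha>:]:] * bipoly p1 p2"
    by (simp add: bipoly_def bipoly_tilde_def)
  hence "is_unit (bipoly p1 p2)" by (intro coprime) (simp_all add: dvd_smult)
  hence "degree (bipoly p1 p2) = 0" using degree_is_unit_poly_poly by blast
  hence "p2 = 0" by (auto simp: bipoly_def degree_pCons_eq_if split: if_splits)
  thus False using \<open>tp1 = smult \<alpha> p2\<close> tp1_nonzero by simp
qed

text \<open>Otherwise \<open>|tp2 / (\<alpha> p1)| \<le> 1\<close> attains the value \<open>1\<close> inside the disc, so by the maximum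
  modulus principle \<open>tp2 = \<alpha> p1\<close>, i.e. \<open>D\<^sub>\<alpha> = 0\<close>.\<close>
lemma poly_B_den0_nonzero_disc:
  assumes "cmod \<alpha> = 1" "cmod z < 1"
  shows "poly (D0 \<alpha>) z \<noteq> 0"
proof
  assume z0: "poly (D0 \<alpha>) z = 0"
  define f where "f = (\<lambda>w. poly tp2 w / (\<alpha> * poly p1 w))"
  have \<alpha>: "\<alpha> \<noteq> 0" using assms by auto
  have "poly tp2 z = \<alpha> * poly p1 z" using z0 by (simp add: B_den0_def)
  hence fz: "f z = 1" using poly_p1_nonzero_disc[OF assms(2)] \<alpha> by (simp add: f_def)
  have le: "norm (f w) \<le> norm (f z)" if "w \<in> ball 0 1" for w
    using cmod_tp2_le_p1_disc[of w] poly_p1_nonzero_disc[of w] that assms(1) fz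
    by (simp add: f_def norm_divide norm_mult divide_le_eq)
  have "f holomorphic_on ball 0 1" unfolding f_def
    by (intro holomorphic_intros) (use \<alpha> in \<open>auto dest: poly_p1_nonzero_disc\<close>)
  moreover have "z \<in> ball 0 1" using assms(2) by simp
  ultimately have "f constant_on ball 0 1"
    by (intro maximum_modulus_principle[of f "ball 0 1" "ball 0 1" z, OF _ _ _ _ _ _ le]) auto
  then obtain c where c: "\<And>w. w \<in> ball 0 1 \<Longrightarrow> f w = c" by (auto simp: constant_on_def)
  have "D0 \<alpha> = 0"
  proof (rule poly_eq_0_if_vanishes_on_disc)
    fix w :: complex assume w: "cmod w < 1"
    have "f w = 1" using c[of w] c[of z] w assms fz by simp
    thus "poly (D0 \<alpha>) w = 0"
      using poly_p1_nonzero_disc[OF w] \<alpha> by (simp add: f_def B_den0_def field_simps)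
  qed
  thus False using B_den0_nonzero assms(1) by blast
qed

lemma B_den0_simple_circle_root:
  assumes "cmod \<alpha> = 1" "cmod \<tau> = 1" "poly (D0 \<alpha>) \<tau> = 0"
  obtains D1 where "D0 \<alpha> = [:-\<tau>, 1:] * D1" "poly D1 \<tau> \<noteq> 0"
    "Im (cnj (\<alpha> * poly p1 \<tau>) * poly D1 \<tau> * \<tau>) = 0"
proof (rule simple_root_on_circle[OF assms(1) _ B_den0_nonzero[OF assms(1)] assms(2) _ assms(3)])
  show "cmod (\<alpha> * poly p1 z - poly (D0 \<alpha>) z) \<le> cmod (poly p1 z)" if "cmod z < 1" for z
    using cmod_tp2_le_p1_disc[OF that] by (simp add: B_den0_def)
  show "poly p1 \<tau> \<noteq> 0" using poly_p1_nonzero_closed_disc assms(2) by simp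
qed

lemma B_den0_not_square_dvd:
  assumes "cmod \<alpha> = 1" "cmod \<tau> = 1"
  shows "\<not> [:-\<tau>, 1:] ^ 2 dvd D0 \<alpha>"
proof
  assume sq: "[:-\<tau>, 1:] ^ 2 dvd D0 \<alpha>"
  hence "[:-\<tau>, 1:] dvd D0 \<alpha>"
    using dvd_trans[OF dvd_triv_left[of "[:-\<tau>,1:]" "[:-\<tau>,1:]"]] by (simp add: power2_eq_square)
  hence "poly (D0 \<alpha>) \<tau> = 0" by (simp add: poly_eq_0_iff_dvd)
  then obtain D1 where D1: "D0 \<alpha> = [:-\<tau>, 1:] * D1" "poly D1 \<tau> \<noteq> 0"
    using B_den0_simple_circle_root[OF assms] by blast
  from sq have "[:-\<tau>, 1:] * [:-\<tau>, 1:] dvd [:-\<tau>, 1:] * D1" by (simp add: D1(1) power2_eq_square)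
  hence "[:-\<tau>, 1:] dvd D1" by (subst (asm) dvd_mult_cancel_left) auto
  thus False using D1(2) by (simp add: poly_eq_0_iff_dvd)
qed

end

section \<open>The Blaschke product \<open>B\<^sub>\<alpha>\<close> and the level set \<open>\<C>\<^sub>\<alpha>\<close>\<close>

context rational_inner
begin

abbreviation "N_red \<alpha> \<equiv> B_num n p1 p2 \<alpha>"
abbreviation "D_red \<alpha> \<equiv> B_den n p1 p2 \<alpha>"

lemma B_num0_B_den0_common_factor:
  assumes "cmod \<alpha> = 1"
  obtains g where "g \<noteq> 0" "N0 \<alpha> = N_red \<alpha> * g" "D0 \<alpha> = D_red \<alpha> * g"
proof (rule that)
  show "gcd (N0 \<alpha>) (D0 \<alpha>) \<noteq> 0" using B_den0_nonzero[OF assms] by simp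
  show "N0 \<alpha> = N_red \<alpha> * gcd (N0 \<alpha>) (D0 \<alpha>)" unfolding B_num_def by (simp add: dvd_div_mult_self)
  show "D0 \<alpha> = D_red \<alpha> * gcd (N0 \<alpha>) (D0 \<alpha>)" unfolding B_den_def by (simp add: dvd_div_mult_self)
qed

lemma B_den_nonzero:
  assumes "cmod \<alpha> = 1"
  shows "D_red \<alpha> \<noteq> 0"
proof -
  obtain g where "D0 \<alpha> = D_red \<alpha> * g" using B_num0_B_den0_common_factor[OF assms] .
  thus ?thesis using B_den0_nonzero[OF assms] by auto
qed

text \<open>Since \<open>N\<^sub>\<alpha>\<close> is \<open>\<alpha>\<close> times the reflection of \<open>D\<^sub>\<alpha>\<close>, the Blaschke factorization of
  \<open>refl_poly n D\<^sub>\<alpha>\<close> is one of \<open>N\<^sub>\<alpha> / D\<^sub>\<alpha>\<close>, and it survives cancelling the gcd.\<close>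
lemma B_num_blaschke_factorization:
  assumes "cmod \<alpha> = 1"
  obtains c as where "cmod c = 1" "length as = n - card (circle_roots (D0 \<alpha>))" "\<forall>a\<in>set as. cmod a < 1"
    "N_red \<alpha> * blaschke_denom as = smult c (blaschke_numer as * D_red \<alpha>)"
proof -
  obtain c as where ca: "cmod c = 1" "length as = n - card (circle_roots (D0 \<alpha>))" "\<forall>a\<in>set as. cmod a < 1"
    "refl_poly n (D0 \<alpha>) * blaschke_denom as = smult c (blaschke_numer as * D0 \<alpha>)"
    using refl_poly_blaschke_factorization[OF B_den0_nonzero[OF assms] degree_B_den0_le]
      poly_B_den0_nonzero_disc[OF assms] B_den0_not_square_dvd[OF assms] by blast
  obtain g where g: "g \<noteq> 0" "N0 \<alpha> = N_red \<alpha> * g" "D0 \<alpha> = D_red \<alpha> * g"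
    using B_num0_B_den0_common_factor[OF assms] .
  have "N0 \<alpha> * blaschke_denom as = smult (\<alpha> * c) (blaschke_numer as * D0 \<alpha>)"
    by (simp add: B_num0_eq_smult_refl_B_den0[OF assms] ca(4))
  hence "(N_red \<alpha> * blaschke_denom as) * g = smult (\<alpha> * c) (blaschke_numer as * D_red \<alpha>) * g"
    by (simp add: g(2,3) mult_ac)
  hence "N_red \<alpha> * blaschke_denom as = smult (\<alpha> * c) (blaschke_numer as * D_red \<alpha>)"
    using g(1) by (simp only: mult_cancel_right) simp
  moreover have "cmod (\<alpha> * c) = 1" using assms ca(1) by (simp add: norm_mult)
  ultimately show ?thesis using that ca(2,3) by blast
qed

lemma fbp_of_degree_B:
  assumes "cmod \<alpha> = 1"
  shows "fbp_of_degree (N_red \<alpha>) (D_red \<alpha>) (n - card (circle_roots (D0 \<alpha>)))"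
proof -
  obtain c as where ca: "cmod c = 1" "length as = n - card (circle_roots (D0 \<alpha>))"
    "\<forall>a\<in>set as. cmod a < 1" "N_red \<alpha> * blaschke_denom as = smult c (blaschke_numer as * D_red \<alpha>)"
    using B_num_blaschke_factorization[OF assms] .
  show ?thesis using fbp_of_degreeI[OF ca(4) B_den_nonzero[OF assms] ca(1,3)] ca(2) by simp
qed

text \<open>A common zero of \<open>D_red\<close> and the gcd on the circle would be a double zero of \<open>D\<^sub>\<alpha>\<close>.\<close>
lemma poly_B_den_nonzero_circle:
  assumes \<alpha>: "cmod \<alpha> = 1" and \<zeta>: "cmod \<zeta> = 1"
  shows "poly (D_red \<alpha>) \<zeta> \<noteq> 0"
proof
  define g where "g = gcd (N0 \<alpha>) (D0 \<alpha>)"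
  have D0: "D0 \<alpha> = D_red \<alpha> * g" unfolding B_den_def g_def by (simp add: dvd_div_mult_self)
  assume D: "poly (D_red \<alpha>) \<zeta> = 0"
  hence "poly (D0 \<alpha>) \<zeta> = 0" by (subst D0) simp
  moreover from this have "poly (N0 \<alpha>) \<zeta> = 0" using cmod_B_num0_eq_B_den0_circle[OF \<alpha> \<zeta>] by simp
  ultimately have "[:-\<zeta>, 1:] dvd g" by (simp add: g_def poly_eq_0_iff_dvd)
  moreover have "[:-\<zeta>, 1:] dvd D_red \<alpha>" using D by (simp add: poly_eq_0_iff_dvd)
  ultimately have "[:-\<zeta>, 1:] ^ 2 dvd D_red \<alpha> * g"
    unfolding power2_eq_square by (rule mult_dvd_mono[rotated])
  hence "[:-\<zeta>, 1:] ^ 2 dvd D0 \<alpha>" by (subst D0)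
  thus False using B_den0_not_square_dvd[OF \<alpha> \<zeta>] by blast
qed

lemma cmod_B_fun_circle:
  assumes \<alpha>: "cmod \<alpha> = 1" and \<zeta>: "cmod \<zeta> = 1"
  shows "cmod (B_fun n p1 p2 \<alpha> \<zeta>) = 1"
proof -
  obtain c as where ca: "cmod c = 1" "length as = n - card (circle_roots (D0 \<alpha>))"
    "\<forall>a\<in>set as. cmod a < 1" "N_red \<alpha> * blaschke_denom as = smult c (blaschke_numer as * D_red \<alpha>)"
    using B_num_blaschke_factorization[OF \<alpha>] .
  hence "cmod (poly (N_red \<alpha>) \<zeta>) = cmod (poly (D_red \<alpha>) \<zeta>)"
    using cmod_poly_eq_circle_if_blaschke[OF ca(4,1,3) \<zeta>] by blast
  thus ?thesis using poly_B_den_nonzero_circle[OF \<alpha> \<zeta>] by (simp add: B_fun_def norm_divide)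
qed

lemma B_fun_eq_B_num0_div_B_den0:
  assumes \<alpha>: "cmod \<alpha> = 1" and D: "poly (D0 \<alpha>) \<zeta> \<noteq> 0"
  shows "B_fun n p1 p2 \<alpha> \<zeta> = poly (N0 \<alpha>) \<zeta> / poly (D0 \<alpha>) \<zeta>"
proof -
  obtain g where g: "g \<noteq> 0" "N0 \<alpha> = N_red \<alpha> * g" "D0 \<alpha> = D_red \<alpha> * g"
    using B_num0_B_den0_common_factor[OF \<alpha>] .
  hence "poly (N0 \<alpha>) \<zeta> = poly (N_red \<alpha>) \<zeta> * poly g \<zeta>"
    "poly (D0 \<alpha>) \<zeta> = poly (D_red \<alpha>) \<zeta> * poly g \<zeta>" by simp_all
  with D show ?thesis unfolding B_fun_def by simp
qed

lemma mem_C_set_iff: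
  "(z1, z2) \<in> C_set n p1 p2 \<alpha> \<longleftrightarrow> cmod z1 = 1 \<and> cmod z2 = 1 \<and> z2 * poly (N0 \<alpha>) z1 = poly (D0 \<alpha>) z1"
  by (auto simp: C_set_def circle_def ptval_def pval_def B_num0_def B_den0_def algebra_simps)

lemma mem_E_set_iff:
  "(z1, z2) \<in> E_set n p1 p2 \<alpha> \<longleftrightarrow> cmod z1 = 1 \<and> z2 = cnj (B_fun n p1 p2 \<alpha> z1)"
  by (auto simp: E_set_def circle_def)

lemma level_equation_iff_conj_B:
  assumes \<alpha>: "cmod \<alpha> = 1" and \<zeta>: "cmod \<zeta> = 1" and D: "poly (D0 \<alpha>) \<zeta> \<noteq> 0"
  shows "w * poly (N0 \<alpha>) \<zeta> = poly (D0 \<alpha>) \<zeta> \<longleftrightarrow> w = cnj (B_fun n p1 p2 \<alpha> \<zeta>)"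
proof -
  have N: "poly (N0 \<alpha>) \<zeta> \<noteq> 0" using D cmod_B_num0_eq_B_den0_circle[OF \<alpha> \<zeta>] by auto
  have "cnj (B_fun n p1 p2 \<alpha> \<zeta>) = 1 / B_fun n p1 p2 \<alpha> \<zeta>"
    using divide_conv_cnj[OF cmod_B_fun_circle[OF \<alpha> \<zeta>], of 1] by simp
  also have "\<dots> = poly (D0 \<alpha>) \<zeta> / poly (N0 \<alpha>) \<zeta>"
    by (simp add: B_fun_eq_B_num0_div_B_den0[OF \<alpha> D])
  finally have B: "cnj (B_fun n p1 p2 \<alpha> \<zeta>) = poly (D0 \<alpha>) \<zeta> / poly (N0 \<alpha>) \<zeta>" .
  show ?thesis unfolding B using N by (simp add: eq_divide_eq)
qed

lemma C_set_eq:
  assumes \<alpha>: "cmod \<alpha> = 1"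
  shows "C_set n p1 p2 \<alpha> = E_set n p1 p2 \<alpha> \<union> (\<Union>\<tau>\<in>circle_roots (D0 \<alpha>). line_set \<tau>)"
proof (rule set_eqI)
  fix z :: "complex \<times> complex"
  obtain z1 z2 where z: "z = (z1, z2)" by force
  have lines: "(z1, z2) \<in> (\<Union>\<tau>\<in>circle_roots (D0 \<alpha>). line_set \<tau>) \<longleftrightarrow> z1 \<in> circle_roots (D0 \<alpha>) \<and> cmod z2 = 1"
    by (auto simp: line_set_def circle_def)
  have "cmod z1 = 1 \<and> cmod z2 = 1 \<and> z2 * poly (N0 \<alpha>) z1 = poly (D0 \<alpha>) z1 \<longleftrightarrow>
      (cmod z1 = 1 \<and> z2 = cnj (B_fun n p1 p2 \<alpha> z1)) \<or> (z1 \<in> circle_roots (D0 \<alpha>) \<and> cmod z2 = 1)"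
  proof (cases "z1 \<in> circle_roots (D0 \<alpha>)")
    case True
    hence "cmod z1 = 1" "poly (D0 \<alpha>) z1 = 0" by (auto simp: circle_roots_def)
    moreover from this have "poly (N0 \<alpha>) z1 = 0" using cmod_B_num0_eq_B_den0_circle[OF \<alpha>, of z1] by simp
    ultimately show ?thesis
      using True cmod_B_fun_circle[OF \<alpha>] by auto
  next
    case False
    hence "cmod z1 = 1 \<Longrightarrow> poly (D0 \<alpha>) z1 \<noteq> 0" by (auto simp: circle_roots_def)
    thus ?thesis
      using False level_equation_iff_conj_B[OF \<alpha>] cmod_B_fun_circle[OF \<alpha>]
      by auto
  qed
  thus "z \<in> C_set n p1 p2 \<alpha> \<longleftrightarrow> z \<in> E_set n p1 p2 \<alpha> \<union> (\<Union>\<tau>\<in>circle_roots (D0 \<alpha>). line_set \<tau>)"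
    unfolding z Un_iff lines mem_C_set_iff mem_E_set_iff .
qed

end

section \<open>Nontangential limits at the zeros of \<open>p\<close> on the torus\<close>

lemma cmod_square_diff_linear_factor:
  fixes P Q E :: "complex poly"
  assumes a: "cmod a = 1" and E: "smult a P + Q = [:-\<tau>, 1:] * E"
  shows "cmod (poly P z) ^ 2 - cmod (poly Q z) ^ 2
      = 2 * Re (cnj a * cnj (poly P z) * poly E z * (z - \<tau>)) - cmod (z - \<tau>) ^ 2 * cmod (poly E z) ^ 2"
proof -
  have "poly Q z = (z - \<tau>) * poly E z - a * poly P z"
    using arg_cong[OF E, of "\<lambda>p. poly p z"] by (simp add: algebra_simps)
  hence "cmod (poly Q z) = cmod (a * poly P z - (z - \<tau>) * poly E z)"
    by (metis minus_diff_eq norm_minus_cancel)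
  hence "cmod (poly Q z) ^ 2 = cmod (a * poly P z) ^ 2
      - 2 * Re (cnj (a * poly P z) * ((z - \<tau>) * poly E z)) + cmod ((z - \<tau>) * poly E z) ^ 2"
    by (simp only: cmod_diff_square)
  moreover have "cmod (a * poly P z) = cmod (poly P z)" using a by (simp add: norm_mult)
  moreover have "cnj (a * poly P z) * ((z - \<tau>) * poly E z) = cnj a * cnj (poly P z) * poly E z * (z - \<tau>)"
    by (simp add: algebra_simps)
  ultimately show ?thesis by (simp only: norm_mult[of "z - \<tau>" "poly E z"] power_mult_distrib)
qed

lemma Re_mult_diff_ge_boundary_distance:
  assumes \<tau>: "cmod \<tau> = 1" and h: "h * \<tau> = - of_real s" and s: "s \<ge> 0"
  shows "s * (1 - cmod z) \<le> Re (h * (z - \<tau>))"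
proof -
  have "z - \<tau> = \<tau> * (cnj \<tau> * z - 1)" using unimodular_mult_cnj[OF \<tau>] by (simp add: algebra_simps)
  hence "Re (h * (z - \<tau>)) = Re ((h * \<tau>) * (cnj \<tau> * z - 1))" by (simp only: mult.assoc)
  also have "\<dots> = s * (1 - Re (cnj \<tau> * z))" unfolding h by (simp add: algebra_simps)
  also have "Re (cnj \<tau> * z) \<le> cmod z"
    using complex_Re_le_cmod[of "cnj \<tau> * z"] \<tau> by (simp add: norm_mult)
  hence "s * (1 - cmod z) \<le> s * (1 - Re (cnj \<tau> * z))" using s by (simp add: mult_left_mono)
  finally show ?thesis .
qed

lemma linear_term_lower_bound_eventually:
  fixes H :: "complex \<Rightarrow> complex"
  assumes \<tau>: "cmod \<tau> = 1" and cont: "isCont H \<tau>" and H\<tau>: "H \<tau> * \<tau> = - of_real s"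
    and s: "s \<ge> 0" and eps: "eps > 0"
  shows "eventually (\<lambda>z. s * (1 - cmod z) - eps * cmod (z - \<tau>) \<le> Re (H z * (z - \<tau>))) (at \<tau>)"
proof -
  have "eventually (\<lambda>z. dist (H z) (H \<tau>) < eps) (at \<tau>)"
    using cont eps by (simp add: isCont_def tendsto_iff)
  thus ?thesis
  proof (rule eventually_mono)
    fix z assume "dist (H z) (H \<tau>) < eps"
    hence "cmod ((H z - H \<tau>) * (z - \<tau>)) \<le> eps * cmod (z - \<tau>)"
      by (simp add: dist_norm norm_mult mult_right_mono)
    hence "- (eps * cmod (z - \<tau>)) \<le> Re ((H z - H \<tau>) * (z - \<tau>))"
      using abs_Re_le_cmod[of "(H z - H \<tau>) * (z - \<tau>)"] by linarith
    moreover have "s * (1 - cmod z) \<le> Re (H \<tau> * (z - \<tau>))" by (rule Re_mult_diff_ge_boundary_distance[OF \<tau> H\<tau> s])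
    moreover have "Re (H z * (z - \<tau>)) = Re (H \<tau> * (z - \<tau>)) + Re ((H z - H \<tau>) * (z - \<tau>))"
      by (simp add: algebra_simps)
    ultimately show "s * (1 - cmod z) - eps * cmod (z - \<tau>) \<le> Re (H z * (z - \<tau>))" by linarith
  qed
qed

lemma quadratic_term_small_eventually:
  fixes E :: "complex \<Rightarrow> complex"
  assumes cont: "isCont E \<tau>" and k: "k > 0"
  shows "eventually (\<lambda>z. cmod (z - \<tau>) ^ 2 * cmod (E z) ^ 2 \<le> k * cmod (z - \<tau>)) (at \<tau>)"
proof -
  have "isCont (\<lambda>z. cmod (z - \<tau>) * cmod (E z) ^ 2) \<tau>" using cont by (intro continuous_intros)
  hence "((\<lambda>z. cmod (z - \<tau>) * cmod (E z) ^ 2) \<longlongrightarrow> 0) (at \<tau>)" by (simp add: isCont_def)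
  hence "eventually (\<lambda>z. cmod (z - \<tau>) * cmod (E z) ^ 2 < k) (at \<tau>)" using k by (rule order_tendstoD)
  thus ?thesis
  proof (rule eventually_mono)
    fix z assume "cmod (z - \<tau>) * cmod (E z) ^ 2 < k"
    hence "cmod (z - \<tau>) * (cmod (z - \<tau>) * cmod (E z) ^ 2) \<le> cmod (z - \<tau>) * k"
      by (intro mult_left_mono) auto
    thus "cmod (z - \<tau>) ^ 2 * cmod (E z) ^ 2 \<le> k * cmod (z - \<tau>)" by (simp add: power2_eq_square mult_ac)
  qed
qed

lemma linear_term_dominates_nontangential:
  fixes H E :: "complex \<Rightarrow> complex"
  assumes \<tau>: "cmod \<tau> = 1" and cont: "isCont H \<tau>" "isCont E \<tau>"
    and H\<tau>: "H \<tau> * \<tau> = - of_real s" and s: "s > 0" and c: "c > 0"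
  obtains \<delta> where "\<delta> > 0" "\<And>z. cmod (z - \<tau>) < \<delta> \<Longrightarrow> cmod (z - \<tau>) < c * (1 - cmod z) \<Longrightarrow>
      s * (1 - cmod z) \<le> 2 * Re (H z * (z - \<tau>)) - cmod (z - \<tau>) ^ 2 * cmod (E z) ^ 2"
proof -
  have "eventually (\<lambda>z. s * (1 - cmod z) - s / (4 * c) * cmod (z - \<tau>) \<le> Re (H z * (z - \<tau>))) (at \<tau>)"
    by (rule linear_term_lower_bound_eventually[OF \<tau> cont(1) H\<tau>]) (use s c in auto)
  moreover have "eventually (\<lambda>z. cmod (z - \<tau>) ^ 2 * cmod (E z) ^ 2 \<le> s / (2 * c) * cmod (z - \<tau>)) (at \<tau>)"
    by (rule quadratic_term_small_eventually[OF cont(2)]) (use s c in auto)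
  ultimately have "eventually (\<lambda>z. s * (1 - cmod z) - s / (4 * c) * cmod (z - \<tau>) \<le> Re (H z * (z - \<tau>)) \<and>
      cmod (z - \<tau>) ^ 2 * cmod (E z) ^ 2 \<le> s / (2 * c) * cmod (z - \<tau>)) (at \<tau>)"
    by (rule eventually_conj)
  then obtain \<delta> where "\<delta> > 0" and \<delta>: "\<And>z. z \<noteq> \<tau> \<Longrightarrow> dist z \<tau> < \<delta> \<Longrightarrow>
      s * (1 - cmod z) - s / (4 * c) * cmod (z - \<tau>) \<le> Re (H z * (z - \<tau>)) \<and>
      cmod (z - \<tau>) ^ 2 * cmod (E z) ^ 2 \<le> s / (2 * c) * cmod (z - \<tau>)"
    unfolding eventually_at by blast
  show ?thesis
  proof (rule that[OF \<open>\<delta> > 0\<close>])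
    fix z assume z: "cmod (z - \<tau>) < \<delta>" "cmod (z - \<tau>) < c * (1 - cmod z)"
    have "z \<noteq> \<tau>" using z(2) \<tau> by auto
    hence bounds: "s * (1 - cmod z) - s / (4 * c) * cmod (z - \<tau>) \<le> Re (H z * (z - \<tau>))"
        "cmod (z - \<tau>) ^ 2 * cmod (E z) ^ 2 \<le> s / (2 * c) * cmod (z - \<tau>)"
      using \<delta> z(1) by (simp_all add: dist_norm)
    have "cmod (z - \<tau>) / c \<le> 1 - cmod z" using z(2) c by (simp add: divide_le_eq mult.commute)
    hence "s * (cmod (z - \<tau>) / c) \<le> s * (1 - cmod z)" using s by (intro mult_left_mono) auto
    moreover have "2 * (s / (4 * c) * cmod (z - \<tau>)) + s / (2 * c) * cmod (z - \<tau>) = s * (cmod (z - \<tau>) / c)"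
      using c by (simp add: field_simps)
    ultimately show "s * (1 - cmod z) \<le> 2 * Re (H z * (z - \<tau>)) - cmod (z - \<tau>) ^ 2 * cmod (E z) ^ 2"
      using bounds by linarith
  qed
qed

lemma nt_region_nontrivial:
  assumes c: "c > 1" and \<tau>: "cmod \<tau> = 1" "cmod lam = 1"
  shows "at (\<tau>, lam) within nt_region c (\<tau>, lam) \<noteq> bot"
proof -
  have "(\<tau>, lam) islimpt nt_region c (\<tau>, lam)"
    unfolding islimpt_approachable
  proof (intro allI impI)
    fix e :: real assume e: "e > 0"
    define r where "r = max (1/2) (1 - e / 4)"
    have r: "r < 1" "1 - r \<le> e / 4" using e by (auto simp: r_def max_def)
    have n: "cmod (of_real r * \<tau>) = r" "cmod (of_real r * lam) = r"
      using \<tau> r by (auto simp: norm_mult r_def)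
    have o: "cmod (complex_of_real (1 - r)) = 1 - r" using r by (subst norm_of_real) simp
    have "\<tau> - of_real r * \<tau> = of_real (1 - r) * \<tau>" "lam - of_real r * lam = of_real (1 - r) * lam"
      by (simp_all add: algebra_simps)
    hence d: "cmod (\<tau> - of_real r * \<tau>) = 1 - r" "cmod (lam - of_real r * lam) = 1 - r"
      using \<tau> by (simp_all only: norm_mult o) simp_all
    hence "dist (of_real r * \<tau>) \<tau> = 1 - r" "dist (of_real r * lam) lam = 1 - r"
      by (simp_all add: dist_norm norm_minus_commute)
    hence "dist (of_real r * \<tau>, of_real r * lam) (\<tau>, lam) = sqrt ((1 - r) ^ 2 + (1 - r) ^ 2)"
      by (simp only: dist_Pair_Pair)
    also have "\<dots> \<le> (1 - r) + (1 - r)" using r by (intro sqrt_sum_squares_le_sum) auto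
    finally have "dist (of_real r * \<tau>, of_real r * lam) (\<tau>, lam) < e" using r e by linarith
    thus "\<exists>x'\<in>nt_region c (\<tau>, lam). x' \<noteq> (\<tau>, lam) \<and> dist x' (\<tau>, lam) < e"
      using n d r c \<tau>
      by (intro bexI[of _ "(of_real r * \<tau>, of_real r * lam)"]) (auto simp: nt_region_def disc_def)
  qed
  thus ?thesis by (simp add: trivial_limit_within)
qed
lemma reflection_value_identity:
  fixes lam \<tau> t P L d :: complex
  assumes u: "cmod lam = 1" "cmod \<tau> = 1" "cmod t = 1" and P: "P \<noteq> 0"
    and LP: "L * P = - lam * \<tau> * t * cnj P"
    and real: "Im (cnj (L * P) * d * \<tau>) = 0"
  shows "lam * (- L * cnj \<tau> * t * cnj d) = d"
proof -
  have inv: "cnj lam = 1 / lam" "cnj \<tau> = 1 / \<tau>" "cnj t = 1 / t"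
    using u divide_conv_cnj[of _ 1] by simp_all
  have nz: "lam \<noteq> 0" "\<tau> \<noteq> 0" "t \<noteq> 0" using u by auto
  define X where "X = cnj (L * P) * d * \<tau>"
  have "X \<in> \<real>" using real complex_is_Real_iff X_def by blast
  hence "cnj X = X" by (simp only: Reals_cnj_iff)
  moreover have "X = - P * d / (lam * t)" unfolding X_def LP using nz by (simp add: inv field_simps)
  ultimately have "- P * d / (lam * t) = - cnj P * cnj d * (lam * t)"
    using nz by (simp add: inv field_simps)
  hence Pd: "P * d = lam ^ 2 * t ^ 2 * cnj P * cnj d" using nz by (simp add: field_simps power2_eq_square)
  have "P * (lam * (- L * cnj \<tau> * t * cnj d)) = - (L * P) * (lam * t * cnj d * cnj \<tau>)"
    by (simp add: algebra_simps)
  also have "\<dots> = (lam ^ 2 * t ^ 2 * cnj P * cnj d) * (\<tau> * cnj \<tau>)"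
    unfolding LP by (simp add: algebra_simps power2_eq_square)
  also have "\<dots> = P * d" using Pd unimodular_mult_cnj[OF u(2)] by simp
  finally show ?thesis using P by (simp only: mult_cancel_left) simp
qed

context rational_inner
begin

lemma poly_p2_nonzero_torus_zero:
  assumes "cmod \<tau> = 1" "poly p1 \<tau> + lam * poly p2 \<tau> = 0"
  shows "poly p2 \<tau> \<noteq> 0"
  using assms poly_p1_nonzero_closed_disc[of \<tau>] by auto

lemma cmod_boundary_value_torus_zero:
  assumes "cmod \<tau> = 1" "cmod lam = 1" "poly p1 \<tau> + lam * poly p2 \<tau> = 0"
  shows "cmod (poly tp1 \<tau> / poly p2 \<tau>) = 1"
proof -
  have "poly p1 \<tau> = - lam * poly p2 \<tau>" using assms(3) by (simp add: eq_neg_iff_add_eq_0)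
  hence "cmod (poly p1 \<tau>) = cmod (poly p2 \<tau>)" using assms(2) by (simp add: norm_mult)
  thus ?thesis using poly_p2_nonzero_torus_zero[OF assms(1,3)] assms(1)
    by (simp add: cmod_poly_refl_poly_circle deg_p1 norm_divide)
qed

text \<open>\<open>smult (cnj \<lambda>) p1 + p2\<close> is \<open>cnj \<lambda>\<close> times the slice \<open>p(\<cdot>, \<lambda>)\<close>.\<close>
lemma slice_nonzero:
  assumes "cmod lam = 1"
  shows "smult (cnj lam) p1 + p2 \<noteq> 0"
proof
  assume "smult (cnj lam) p1 + p2 = 0"
  hence p2: "p2 = - smult (cnj lam) p1" by (simp add: eq_neg_iff_add_eq_0 add.commute)
  define q where "q = [:[:-lam:], [:1:]:]"
  have "bipoly p1 p2 = [:smult (- cnj lam) p1:] * q"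
    using unimodular_mult_cnj[OF assms] by (simp add: bipoly_def q_def p2 smult_smult mult.commute)
  moreover have "bipoly_tilde n p1 p2 = [:tp1:] * q"
    by (simp add: bipoly_tilde_def q_def p2 refl_poly_minus refl_poly_smult)
  ultimately have "is_unit q" by (intro coprime) (metis dvd_triv_right)+
  thus False using degree_is_unit_poly_poly[of q] by (simp add: q_def)
qed

lemma slice_simple_root:
  assumes "cmod \<tau> = 1" "cmod lam = 1" "poly p1 \<tau> + lam * poly p2 \<tau> = 0"
  obtains E where "smult (cnj lam) p1 + p2 = [:-\<tau>, 1:] * E"
    "Re (lam * cnj (poly p1 \<tau>) * poly E \<tau> * \<tau>) < 0" "Im (lam * cnj (poly p1 \<tau>) * poly E \<tau> * \<tau>) = 0"
proof -
  have "poly (smult (cnj lam) p1 + p2) \<tau> = cnj lam * (poly p1 \<tau> + lam * poly p2 \<tau>)"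
    using unimodular_mult_cnj[OF assms(2)] by (simp add: algebra_simps)
  hence root: "poly (smult (cnj lam) p1 + p2) \<tau> = 0" using assms(3) by simp
  have "cmod (cnj lam * poly p1 z - poly (smult (cnj lam) p1 + p2) z) \<le> cmod (poly p1 z)"
    if "cmod z < 1" for z
    using cmod_p2_le_p1_disc[OF that] by simp
  from simple_root_on_circle[of "cnj lam", OF _ this slice_nonzero[OF assms(2)] assms(1) _ root]
  obtain E where "smult (cnj lam) p1 + p2 = [:-\<tau>, 1:] * E"
    "Re (cnj (cnj lam * poly p1 \<tau>) * poly E \<tau> * \<tau>) < 0" "Im (cnj (cnj lam * poly p1 \<tau>) * poly E \<tau> * \<tau>) = 0"
    using assms poly_p1_nonzero_closed_disc[of \<tau>] by auto
  thus ?thesis using that by simp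
qed

lemma B_num0_factor_if_B_den0_factor:
  assumes \<alpha>: "cmod \<alpha> = 1" and \<tau>: "cmod \<tau> = 1" and D1: "D0 \<alpha> = [:-\<tau>, 1:] * D1"
  shows "N0 \<alpha> = [:-\<tau>, 1:] * smult (- \<alpha> * cnj \<tau>) (refl_poly (n - 1) D1)"
proof -
  have "D1 \<noteq> 0" using D1 B_den0_nonzero[OF \<alpha>] by auto
  hence "degree (D0 \<alpha>) = Suc (degree D1)" unfolding D1 by (subst degree_mult_eq) auto
  hence deg: "degree D1 \<le> n - 1" using degree_B_den0_le[of \<alpha>] by simp
  have "Suc (n - 1) = n" using n by simp
  hence "refl_poly n (D0 \<alpha>) = smult (- cnj \<tau>) ([:-\<tau>, 1:] * refl_poly (n - 1) D1)"
    using refl_poly_linear_factor[OF \<tau> deg] by (simp only: D1)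
  thus ?thesis using B_num0_eq_smult_refl_B_den0[OF \<alpha>] by (simp add: mult_smult_right)
qed

text \<open>At a torus zero \<open>(\<tau>, \<lambda>)\<close> with boundary value \<open>L\<close>, the polynomial \<open>\<lambda> N\<^sub>L - D\<^sub>L\<close> vanishes to
  second order in \<open>z\<^sub>1\<close> at \<open>\<tau>\<close>; the real-valuedness from \<open>B_den0_simple_circle_root\<close> is what
  makes the derivatives match.\<close>
lemma common_factor_torus_zero:
  assumes tz: "cmod \<tau> = 1" "cmod lam = 1" "poly p1 \<tau> + lam * poly p2 \<tau> = 0"
  defines "L \<equiv> poly tp1 \<tau> / poly p2 \<tau>"
  obtains N1 D1 where "N0 L = [:-\<tau>, 1:] * N1" "D0 L = [:-\<tau>, 1:] * D1" "lam * poly N1 \<tau> = poly D1 \<tau>"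
proof -
  have p2: "poly p2 \<tau> \<noteq> 0" by (rule poly_p2_nonzero_torus_zero[OF tz(1,3)])
  have L: "cmod L = 1" unfolding L_def by (rule cmod_boundary_value_torus_zero[OF tz])
  have "poly (N0 L) \<tau> = 0" using p2 by (simp add: B_num0_def L_def)
  hence "poly (D0 L) \<tau> = 0" using cmod_B_num0_eq_B_den0_circle[OF L tz(1)] by simp
  then obtain D1 where D1: "D0 L = [:-\<tau>, 1:] * D1" "Im (cnj (L * poly p1 \<tau>) * poly D1 \<tau> * \<tau>) = 0"
    using B_den0_simple_circle_root[OF L tz(1)] by blast
  define N1 where "N1 = smult (- L * cnj \<tau>) (refl_poly (n - 1) D1)"
  have N1: "N0 L = [:-\<tau>, 1:] * N1"
    unfolding N1_def by (rule B_num0_factor_if_B_den0_factor[OF L tz(1) D1(1)])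
  have "D1 \<noteq> 0" using D1(1) B_den0_nonzero[OF L] by auto
  hence "degree (D0 L) = Suc (degree D1)" unfolding D1 by (subst degree_mult_eq) auto
  hence deg: "degree D1 \<le> n - 1" using degree_B_den0_le[of L] by simp
  define t where "t = \<tau> ^ (n - 1)"
  have \<tau>n: "\<tau> ^ n = \<tau> * t" unfolding t_def using n by (simp add: power_eq_if)
  have "poly p1 \<tau> = - lam * poly p2 \<tau>" using tz(3) by (simp add: eq_neg_iff_add_eq_0)
  hence "L * poly p1 \<tau> = - lam * (L * poly p2 \<tau>)" by simp
  also have "L * poly p2 \<tau> = \<tau> ^ n * cnj (poly p1 \<tau>)"
    unfolding L_def using p2 poly_refl_poly_circle[OF deg_p1 tz(1)] by simp
  finally have LP: "L * poly p1 \<tau> = - lam * \<tau> * t * cnj (poly p1 \<tau>)"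
    by (simp only: \<tau>n mult.assoc)
  have N1\<tau>: "poly N1 \<tau> = - L * cnj \<tau> * t * cnj (poly D1 \<tau>)"
    unfolding N1_def t_def using poly_refl_poly_circle[OF deg tz(1)] by simp
  have "cmod t = 1" unfolding t_def using tz(1) by (simp add: norm_power)
  moreover have "poly p1 \<tau> \<noteq> 0" using poly_p1_nonzero_closed_disc tz(1) by simp
  ultimately have "lam * (- L * cnj \<tau> * t * cnj (poly D1 \<tau>)) = poly D1 \<tau>"
    using reflection_value_identity[OF tz(2,1) _ _ LP D1(2)] by blast
  thus ?thesis using that N1 D1(1) N1\<tau> by simp
qed

lemma p_square_gap_nontangential:
  assumes tz: "cmod \<tau> = 1" "cmod lam = 1" "poly p1 \<tau> + lam * poly p2 \<tau> = 0" and c: "c > 0"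
  obtains s \<delta> where "s > 0" "\<delta> > 0" "\<And>z. cmod (z - \<tau>) < \<delta> \<Longrightarrow> cmod (z - \<tau>) < c * (1 - cmod z) \<Longrightarrow>
     s * (1 - cmod z) \<le> cmod (poly p1 z) ^ 2 - cmod (poly p2 z) ^ 2"
proof -
  obtain E where E: "smult (cnj lam) p1 + p2 = [:-\<tau>, 1:] * E"
    "Re (lam * cnj (poly p1 \<tau>) * poly E \<tau> * \<tau>) < 0" "Im (lam * cnj (poly p1 \<tau>) * poly E \<tau> * \<tau>) = 0"
    using slice_simple_root[OF tz] .
  define H where "H = (\<lambda>z. lam * cnj (poly p1 z) * poly E z)"
  define s where "s = - Re (H \<tau> * \<tau>)"
  have s: "s > 0" using E(2) by (simp add: s_def H_def)
  have H\<tau>: "H \<tau> * \<tau> = - of_real s" using E(3) by (simp add: s_def H_def complex_eq_iff)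
  have cont: "isCont H \<tau>" "isCont (poly E) \<tau>" unfolding H_def by (intro continuous_intros)+
  obtain \<delta> where "\<delta> > 0" and \<delta>: "\<And>z. cmod (z - \<tau>) < \<delta> \<Longrightarrow> cmod (z - \<tau>) < c * (1 - cmod z) \<Longrightarrow>
      s * (1 - cmod z) \<le> 2 * Re (H z * (z - \<tau>)) - cmod (z - \<tau>) ^ 2 * cmod (poly E z) ^ 2"
    by (rule linear_term_dominates_nontangential[OF tz(1) cont H\<tau> s c]) blast
  have "cmod (cnj lam) = 1" using tz(2) by simp
  from cmod_square_diff_linear_factor[OF this E(1)]
  have gap: "cmod (poly p1 z) ^ 2 - cmod (poly p2 z) ^ 2
      = 2 * Re (H z * (z - \<tau>)) - cmod (z - \<tau>) ^ 2 * cmod (poly E z) ^ 2" for z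
    by (simp add: H_def)
  show ?thesis
  proof (rule that[OF s \<open>\<delta> > 0\<close>])
    fix z assume "cmod (z - \<tau>) < \<delta>" "cmod (z - \<tau>) < c * (1 - cmod z)"
    thus "s * (1 - cmod z) \<le> cmod (poly p1 z) ^ 2 - cmod (poly p2 z) ^ 2" unfolding gap by (rule \<delta>)
  qed
qed

lemma cmod_pval_lower_bound_nontangential:
  assumes tz: "cmod \<tau> = 1" "cmod lam = 1" "poly p1 \<tau> + lam * poly p2 \<tau> = 0" and c: "c > 0"
  obtains \<kappa> \<delta> where "\<kappa> > 0" "\<delta> > 0" "\<And>z1 z2. cmod z2 < 1 \<Longrightarrow> cmod (z1 - \<tau>) < \<delta> \<Longrightarrow>
     cmod (z1 - \<tau>) < c * (1 - cmod z1) \<Longrightarrow> \<kappa> * cmod (z1 - \<tau>) \<le> cmod (pval p1 p2 (z1, z2))"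
proof -
  obtain s \<delta> where s: "s > 0" and "\<delta> > 0" and gap: "\<And>z. cmod (z - \<tau>) < \<delta> \<Longrightarrow>
      cmod (z - \<tau>) < c * (1 - cmod z) \<Longrightarrow> s * (1 - cmod z) \<le> cmod (poly p1 z) ^ 2 - cmod (poly p2 z) ^ 2"
    by (rule p_square_gap_nontangential[OF tz c]) blast
  have "isCont (poly p1) \<tau>" by (intro continuous_intros)
  then obtain d where "d > 0" and d: "\<And>z. cmod (z - \<tau>) < d \<Longrightarrow> cmod (poly p1 z - poly p1 \<tau>) < 1"
    unfolding continuous_at_eps_delta dist_norm by (meson zero_less_one)
  define M where "M = cmod (poly p1 \<tau>) + 1"
  have M: "M > 0" by (simp add: M_def add_nonneg_pos)
  show ?thesis
  proof (rule that[of "s / (2 * M * c)" "min \<delta> d"])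
    show "s / (2 * M * c) > 0" "min \<delta> d > 0" using s M c \<open>\<delta> > 0\<close> \<open>d > 0\<close> by simp_all
    fix z1 z2 assume z2: "cmod z2 < 1"
      and z1: "cmod (z1 - \<tau>) < min \<delta> d" "cmod (z1 - \<tau>) < c * (1 - cmod z1)"
    have "cmod z1 < 1" using z1(2) c by (smt (verit) norm_ge_zero zero_less_mult_iff)
    define A B where "A = cmod (poly p1 z1)" and "B = cmod (poly p2 z1)"
    have BA: "B \<le> A" using cmod_p2_le_p1_disc[OF \<open>cmod z1 < 1\<close>] by (simp add: A_def B_def)
    have AM: "A \<le> M"
      using d[of z1] z1(1) norm_triangle_ineq2[of "poly p1 z1" "poly p1 \<tau>"] by (simp add: A_def M_def)
    have "s * (1 - cmod z1) \<le> A ^ 2 - B ^ 2" using gap z1 by (simp add: A_def B_def)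
    also have "A ^ 2 - B ^ 2 = (A - B) * (A + B)" by (simp add: power2_eq_square algebra_simps)
    also have "\<dots> \<le> (A - B) * (2 * M)" using BA AM by (intro mult_left_mono) (auto simp: B_def)
    finally have "s * (1 - cmod z1) / (2 * M) \<le> A - B" using M by (simp add: pos_divide_le_eq)
    moreover have "s / (2 * M * c) * cmod (z1 - \<tau>) \<le> s * (1 - cmod z1) / (2 * M)"
    proof -
      have "cmod (z1 - \<tau>) / c \<le> 1 - cmod z1" using z1(2) c by (simp add: divide_le_eq mult.commute)
      hence "s / (2 * M) * (cmod (z1 - \<tau>) / c) \<le> s / (2 * M) * (1 - cmod z1)"
        using s M by (intro mult_left_mono) auto
      thus ?thesis by (simp add: field_simps)
    qed
    moreover have "A - B \<le> cmod (pval p1 p2 (z1, z2))"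
    proof -
      have "cmod (z2 * poly p2 z1) \<le> B" using z2 by (simp add: norm_mult B_def mult_left_le_one_le)
      moreover have "cmod (poly p1 z1) - cmod (z2 * poly p2 z1) \<le> cmod (pval p1 p2 (z1, z2))"
        unfolding pval_def by (simp add: norm_diff_ineq)
      ultimately show ?thesis by (simp add: A_def)
    qed
    ultimately show "s / (2 * M * c) * cmod (z1 - \<tau>) \<le> cmod (pval p1 p2 (z1, z2))" by linarith
  qed
qed

lemma phi_minus_eq_if_common_factor:
  assumes "N0 L = [:-\<tau>, 1:] * N1" "D0 L = [:-\<tau>, 1:] * D1" "pval p1 p2 z \<noteq> 0"
  shows "phi n p1 p2 z - L = (fst z - \<tau>) * (snd z * poly N1 (fst z) - poly D1 (fst z)) / pval p1 p2 z"
proof -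
  have "ptval n p1 p2 z - L * pval p1 p2 z = snd z * poly (N0 L) (fst z) - poly (D0 L) (fst z)"
    by (simp add: ptval_def pval_def B_num0_def B_den0_def algebra_simps)
  also have "\<dots> = (fst z - \<tau>) * (snd z * poly N1 (fst z) - poly D1 (fst z))"
    by (simp add: assms(1,2) algebra_simps)
  finally show ?thesis using assms(3) by (simp add: phi_def field_simps)
qed

text \<open>Near \<open>(\<tau>, \<lambda>)\<close> the numerator of \<open>\<phi> - L\<close> is \<open>(z\<^sub>1 - \<tau>) W(z)\<close> with \<open>W(\<tau>, \<lambda>) = 0\<close>, while in the
  approach region \<open>|p| \<ge> \<kappa> |z\<^sub>1 - \<tau>|\<close>; hence \<open>|\<phi> - L| \<le> |W| / \<kappa> \<rightarrow> 0\<close>.\<close>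
lemma phi_tendsto_nontangential:
  assumes tz: "cmod \<tau> = 1" "cmod lam = 1" "poly p1 \<tau> + lam * poly p2 \<tau> = 0" and c: "c > 1"
  shows "(phi n p1 p2 \<longlongrightarrow> poly tp1 \<tau> / poly p2 \<tau>) (at (\<tau>, lam) within nt_region c (\<tau>, lam))"
proof -
  define L where "L = poly tp1 \<tau> / poly p2 \<tau>"
  define S where "S = nt_region c (\<tau>, lam)"
  obtain N1 D1 where ND: "N0 L = [:-\<tau>, 1:] * N1" "D0 L = [:-\<tau>, 1:] * D1" "lam * poly N1 \<tau> = poly D1 \<tau>"
    using common_factor_torus_zero[OF tz] unfolding L_def by blast
  obtain \<kappa> \<delta> where "\<kappa> > 0" "\<delta> > 0" and low: "\<And>z1 z2. cmod z2 < 1 \<Longrightarrow> cmod (z1 - \<tau>) < \<delta> \<Longrightarrow>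
     cmod (z1 - \<tau>) < c * (1 - cmod z1) \<Longrightarrow> \<kappa> * cmod (z1 - \<tau>) \<le> cmod (pval p1 p2 (z1, z2))"
    by (rule cmod_pval_lower_bound_nontangential[OF tz, of c]) (use c in auto)
  define W where "W = (\<lambda>z::complex \<times> complex. snd z * poly N1 (fst z) - poly D1 (fst z))"
  have "eventually (\<lambda>z. norm (phi n p1 p2 z - L) \<le> norm (W z) / \<kappa>) (at (\<tau>, lam) within S)"
    unfolding eventually_at
  proof (intro exI[of _ \<delta>] conjI ballI impI)
    show "\<delta> > 0" by fact
    fix z assume zS: "z \<in> S" and zd: "z \<noteq> (\<tau>, lam) \<and> dist z (\<tau>, lam) < \<delta>"
    obtain z1 z2 where z: "z = (z1, z2)" by (cases z)
    have z12: "cmod z1 < 1" "cmod z2 < 1" "cmod (z1 - \<tau>) < c * (1 - cmod z1)"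
      using zS by (auto simp: S_def nt_region_def z disc_def norm_minus_commute)
    have "cmod (z1 - \<tau>) \<le> dist z (\<tau>, lam)" using dist_fst_le[of z "(\<tau>, lam)"] by (simp add: z dist_norm)
    hence lowz: "\<kappa> * cmod (z1 - \<tau>) \<le> cmod (pval p1 p2 z)" using zd low z12 by (simp add: z)
    have pval: "pval p1 p2 z \<noteq> 0" using no_zeros[OF z12(1,2)] by (simp add: z)
    have "phi n p1 p2 z - L = (z1 - \<tau>) * W z / pval p1 p2 z"
      using phi_minus_eq_if_common_factor[OF ND(1,2) pval] by (simp add: z W_def)
    hence "norm (phi n p1 p2 z - L) = cmod (z1 - \<tau>) * norm (W z) / cmod (pval p1 p2 z)"
      by (simp add: norm_mult norm_divide)
    also have "\<dots> \<le> norm (W z) / \<kappa>"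
    proof -
      have "\<kappa> * (cmod (z1 - \<tau>) * norm (W z)) \<le> cmod (pval p1 p2 z) * norm (W z)"
        using mult_right_mono[OF lowz, of "norm (W z)"] by (simp add: algebra_simps)
      thus ?thesis using \<open>\<kappa> > 0\<close> pval by (simp add: field_simps)
    qed
    finally show "norm (phi n p1 p2 z - L) \<le> norm (W z) / \<kappa>" .
  qed
  moreover have "continuous (at (\<tau>, lam) within S) W" unfolding W_def by (intro continuous_intros)
  hence "((\<lambda>z. norm (W z) / \<kappa>) \<longlongrightarrow> 0) (at (\<tau>, lam) within S)"
    using ND(3) by (intro tendsto_divide_zero tendsto_norm_zero) (simp add: continuous_within W_def)
  ultimately have "((\<lambda>z. phi n p1 p2 z - L) \<longlongrightarrow> 0) (at (\<tau>, lam) within S)"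
    by (rule Lim_null_comparison)
  thus ?thesis unfolding L_def S_def by (simp add: LIM_zero_iff)
qed

lemma nt_lim_phi_torus_zero:
  assumes tz: "cmod \<tau> = 1" "cmod lam = 1" "poly p1 \<tau> + lam * poly p2 \<tau> = 0"
  shows "nt_lim (phi n p1 p2) (\<tau>, lam) = poly tp1 \<tau> / poly p2 \<tau>"
  unfolding nt_lim_def
proof (rule the_equality)
  show "has_nt_limit (phi n p1 p2) (\<tau>, lam) (poly tp1 \<tau> / poly p2 \<tau>)"
    unfolding has_nt_limit_def using phi_tendsto_nontangential[OF tz] by blast
  fix L' assume "has_nt_limit (phi n p1 p2) (\<tau>, lam) L'"
  hence "(phi n p1 p2 \<longlongrightarrow> L') (at (\<tau>, lam) within nt_region 2 (\<tau>, lam))"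
    unfolding has_nt_limit_def by simp
  moreover have "(phi n p1 p2 \<longlongrightarrow> poly tp1 \<tau> / poly p2 \<tau>) (at (\<tau>, lam) within nt_region 2 (\<tau>, lam))"
    using phi_tendsto_nontangential[OF tz, of 2] by simp
  ultimately show "L' = poly tp1 \<tau> / poly p2 \<tau>"
    using tendsto_unique[OF nt_region_nontrivial[of 2, OF _ tz(1,2)]] by simp
qed

end

section \<open>Exceptional points\<close>

context rational_inner
begin

lemma mem_exc_points_iff:
  "(t, lam) \<in> exc_points n p1 p2 \<alpha> \<longleftrightarrow> cmod t = 1 \<and> cmod lam = 1 \<and>
     poly p1 t + lam * poly p2 t = 0 \<and> poly tp1 t / poly p2 t = \<alpha>"
  unfolding exc_points_def torus_zeros_def circle_def pval_def
  using nt_lim_phi_torus_zero[of t lam] by auto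

lemma inj_on_fst_exc_points: "inj_on fst (exc_points n p1 p2 \<alpha>)"
proof (rule inj_onI)
  fix x y assume x: "x \<in> exc_points n p1 p2 \<alpha>" and y: "y \<in> exc_points n p1 p2 \<alpha>" and fst: "fst x = fst y"
  obtain t l l' where xy: "x = (t, l)" "y = (t, l')" using fst by (metis prod.collapse)
  have "poly p1 t + l * poly p2 t = 0" "poly p1 t + l' * poly p2 t = 0" "cmod t = 1"
    using x y by (simp_all add: xy mem_exc_points_iff)
  moreover from this have "poly p2 t \<noteq> 0" by (intro poly_p2_nonzero_torus_zero)
  ultimately have "l = l'" by (metis add_left_cancel mult_cancel_right)
  thus "x = y" by (simp add: xy)
qed

lemma fst_exc_points:
  assumes \<alpha>: "cmod \<alpha> = 1"
  shows "fst ` exc_points n p1 p2 \<alpha> = circle_roots (D0 \<alpha>)"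
proof (intro equalityI subsetI)
  fix t assume "t \<in> fst ` exc_points n p1 p2 \<alpha>"
  then obtain l where "(t, l) \<in> exc_points n p1 p2 \<alpha>" by force
  hence t: "cmod t = 1" "poly p1 t + l * poly p2 t = 0" "poly tp1 t / poly p2 t = \<alpha>"
    by (simp_all add: mem_exc_points_iff)
  have "poly p2 t \<noteq> 0" by (rule poly_p2_nonzero_torus_zero[OF t(1,2)])
  hence "poly (N0 \<alpha>) t = 0" using t(3) by (simp add: B_num0_def field_simps)
  hence "poly (D0 \<alpha>) t = 0" using cmod_B_num0_eq_B_den0_circle[OF \<alpha> t(1)] by simp
  thus "t \<in> circle_roots (D0 \<alpha>)" using t(1) by (simp add: circle_roots_def)
next
  fix t assume "t \<in> circle_roots (D0 \<alpha>)"
  hence t: "cmod t = 1" "poly (D0 \<alpha>) t = 0" by (auto simp: circle_roots_def)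
  hence "poly (N0 \<alpha>) t = 0" using cmod_B_num0_eq_B_den0_circle[OF \<alpha> t(1)] by simp
  hence tp1: "poly tp1 t = \<alpha> * poly p2 t" by (simp add: B_num0_def)
  have tp1_p1: "cmod (poly tp1 t) = cmod (poly p1 t)"
    using t(1) by (simp add: cmod_poly_refl_poly_circle deg_p1)
  have p1: "poly p1 t \<noteq> 0" using poly_p1_nonzero_closed_disc t(1) by simp
  hence p2: "poly p2 t \<noteq> 0" using tp1 tp1_p1 by auto
  define l where "l = - poly p1 t / poly p2 t"
  have "cmod l = 1" using tp1_p1 tp1 \<alpha> p1 p2 by (simp add: l_def norm_divide norm_mult)
  moreover have "poly p1 t + l * poly p2 t = 0" using p2 by (simp add: l_def)
  ultimately have "(t, l) \<in> exc_points n p1 p2 \<alpha>" using t(1) tp1 p2 by (simp add: mem_exc_points_iff)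
  thus "t \<in> fst ` exc_points n p1 p2 \<alpha>" by force
qed

end

theorem theorem3p3:
  fixes n :: nat and p1 p2 :: "complex poly" and \<alpha> :: complex
  assumes n: "n \<ge> 1"
    and deg_p: "degree p1 \<le> n" "degree p2 \<le> n"
    and no_zeros: "\<And>z1 z2. cmod z1 < 1 \<Longrightarrow> cmod z2 < 1 \<Longrightarrow> pval p1 p2 (z1, z2) \<noteq> 0"
    and deg_pt: "refl_poly n p1 \<noteq> 0"
       "max (degree (refl_poly n p1)) (degree (refl_poly n p2)) = n"
    and coprime: "\<And>q. q dvd bipoly p1 p2 \<Longrightarrow> q dvd bipoly_tilde n p1 p2 \<Longrightarrow> is_unit q"
    and alpha: "cmod \<alpha> = 1"
  shows "is_fbp (B_num n p1 p2 \<alpha>) (B_den n p1 p2 \<alpha>)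
     \<and> (\<not> exceptional n p1 p2 \<alpha> \<longrightarrow>
          fbp_of_degree (B_num n p1 p2 \<alpha>) (B_den n p1 p2 \<alpha>) n
          \<and> C_set n p1 p2 \<alpha> = E_set n p1 p2 \<alpha>)
     \<and> (exceptional n p1 p2 \<alpha> \<longrightarrow>
          fbp_of_degree (B_num n p1 p2 \<alpha>) (B_den n p1 p2 \<alpha>) (n - card (exc_points n p1 p2 \<alpha>))
          \<and> C_set n p1 p2 \<alpha> = E_set n p1 p2 \<alpha> \<union> (\<Union>\<zeta>\<in>exc_points n p1 p2 \<alpha>. line_set (fst \<zeta>)))"
proof -
  interpret rational_inner n p1 p2
    using n deg_p no_zeros deg_pt(1) coprime by unfold_locales
  have roots: "circle_roots (B_den0 n p1 p2 \<alpha>) = fst ` exc_points n p1 p2 \<alpha>"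
    using fst_exc_points[OF alpha] by simp
  have "card (exc_points n p1 p2 \<alpha>) = card (circle_roots (B_den0 n p1 p2 \<alpha>))"
    unfolding roots by (rule card_image[OF inj_on_fst_exc_points, symmetric])
  moreover have "(\<Union>\<zeta>\<in>exc_points n p1 p2 \<alpha>. line_set (fst \<zeta>))
      = (\<Union>\<tau>\<in>circle_roots (B_den0 n p1 p2 \<alpha>). line_set \<tau>)"
    unfolding roots by blast
  moreover have "exceptional n p1 p2 \<alpha> \<longleftrightarrow> circle_roots (B_den0 n p1 p2 \<alpha>) \<noteq> {}"
    unfolding exceptional_def roots by blast
  ultimately show ?thesis
    using fbp_of_degree_B[OF alpha] C_set_eq[OF alpha] by (auto simp: is_fbp_def)
qed
end
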